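(* Given $x \in \mathbb{T}^2$ and $i \in \{1,\dots,M\}$ such that $\mu(\Phi^{\overline{U}}(x,0,t^i_a+s)) \neq 0$ or $\mu(\Phi^{\overline{u}^{\star}(\cdot-S_i, \cdot)}(x+S_i,0,s)) \neq 0$ holds for at least one $s \in [0,T^{\star}]$, it holds \[ \Phi^{\overline{U}}(x,0,t^i_a+t) = \Phi^{\overline{u}^{\star}(\cdot-S_i, \cdot)}(x+S_i,0,t) \] for all $t \in [0, T^{\star}]$.
   Context: $\mathbb{T}^2=\mathbb{R}^2/2\pi\mathbb{Z}^2$, $\omega\subset\mathbb{T}^2$ nonempty open. $\Phi^v(x,s,t)$ denotes the flow of a vector field $v$: $\frac{d}{dt}\Phi^v(x,s,t)=v(\Phi^v(x,s,t),t)$, $\Phi^v(x,s,s)=x$. A length $L>0$ (depending on $\omega$) is fixed with: an open covering of $\mathbb{T}^2$ by squares $\mathcal{O}_1,\dots,\mathcal{O}_M$ of side $L$; an open square $\mathcal{O}$ with $\overline{\mathcal{O}}\subset\omega$ and shifts $S_i\in\mathbb{R}^2$ with $\mathcal{O}=\mathcal{O}_i+S_i$; a cutoff $\mu\in C^\infty(\mathbb{T}^2;[0,1])$ with $\operatorname{supp}\mu\subset\mathcal{O}$ and $\sum_i\mu(\cdot+S_i)=1$; a cutoff $\chi\in C^\infty(\mathbb{T}^2)$ with $\operatorname{supp}\chi\subset\omega$, $\chi=1$ near $\overline{\mathcal{O}}$; and times $T^\star=1/(3M+2)$ and $0<t^0_c<t^1_a<t^1_b<t^1_c<\dots<t^M_c<1$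 equidistant with spacing $T^\star$. $\overline{y}\in C_0^\infty((0,1);C^\infty(\mathbb{T}^2;\mathbb{R}^2))$ is a divergence-free field vanishing on $[t^i_a,t^i_b]$ for all $i$, whose flow satisfies $\Phi^{\overline{y}}(x,0,[t^i_a,t^i_b])=\{x+S_i\}$ whenever $\operatorname{dist}(x,\mathcal{O}_i)<L$, and which is odd-in-time about the midpoints of $[t^{i-1}_c,t^i_c]$. $\overline{u}^\star=\nabla^\perp\overline{\phi}^\star$ on $[0,T^\star]$ is a divergence-free field with stream function $\overline{\phi}^\star$ in $\operatorname{span}\{\sin x_1,\sin x_2,\cos x_1,\cos x_2\}$ at each time, time-reversal symmetric about $T^\star/2$, and so small (via a parameter $\kappa$) that there is $r\in(0,L)$ with $\chi=1$ on the $r$-neighborhood $\mathcal{N}_r$ of $\mathcal{O}$, $\mathcal{N}_r$ containing all flow images $\Phi^{\nabla^\perp[\chi\overline{\phi}^\star(\cdot-S,\cdot)]}(\operatorname{supp}\mu,s,t)$ and $\Phi^{\overline{u}^\star(\cdot-S,\cdot)}(\operatorname{supp}\mu,s,t)$ ($s,t\in[0,T^\star]$, $S\in\mathbb{R}^2$). Finally $\overline{U}(x,t)=\overline{y}(x,t)+\sum_{i=1}^M\mathbb{I}_{[t^i_a,t^i_b]}(t)\nabla^\perp[\chi(x)\overline{\phi}^\star(x-S_i,t-t^i_a)]$. *)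

theory Defs
  imports "HOL-Analysis.Analysis"
begin

text \<open>The torus T^2 = R^2 / 2 pi Z^2 is modelled by its lift R^2 (type real^2):
  functions on T^2 are 2 pi Z^2-periodic functions on R^2, subsets of T^2 are
  lattice-invariant subsets of R^2, and equality of points of T^2 is congruence
  modulo the lattice.\<close>

definition lat2 :: "(real^2) set" where
  "lat2 = {v. \<forall>j. \<exists>m::int. v $ j = 2 * pi * of_int m}"

definition torus_eq :: "real^2 \<Rightarrow> real^2 \<Rightarrow> bool" where
  "torus_eq x y \<longleftrightarrow> x - y \<in> lat2"

definition periodic_fun :: "(real^2 \<Rightarrow> 'b) \<Rightarrow> bool" where
  "periodic_fun f \<longleftrightarrow> (\<forall>x v. v \<in> lat2 \<longrightarrow> f (x + v) = f x)"

definition periodic_set :: "(real^2) set \<Rightarrow> bool" where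
  "periodic_set A \<longleftrightarrow> (\<forall>x v. v \<in> lat2 \<longrightarrow> (x + v \<in> A \<longleftrightarrow> x \<in> A))"

definition tsquare :: "real^2 \<Rightarrow> real \<Rightarrow> (real^2) set" where
  "tsquare c L = {x. \<exists>v\<in>lat2. x + v \<in> box c (c + (\<chi> j. L))}"

definition supp :: "(real^2 \<Rightarrow> 'b::zero) \<Rightarrow> (real^2) set" where
  "supp f = closure {x. f x \<noteq> 0}"

fun iter_dd :: "'a::real_normed_vector list \<Rightarrow> ('a \<Rightarrow> 'b::real_normed_vector) \<Rightarrow> 'a \<Rightarrow> 'b" where
  "iter_dd [] f = f"
| "iter_dd (v # vs) f = (\<lambda>x. frechet_derivative (iter_dd vs f) (at x) v)"

definition smooth_fun :: "('a::real_normed_vector \<Rightarrow> 'b::real_normed_vector) \<Rightarrow> bool" where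
  "smooth_fun f \<longleftrightarrow> (\<forall>vs x. iter_dd vs f differentiable (at x))"

definition pd :: "(real^2 \<Rightarrow> real) \<Rightarrow> 2 \<Rightarrow> real^2 \<Rightarrow> real" where
  "pd f k x = frechet_derivative f (at x) (axis k 1)"

definition perp_grad :: "(real^2 \<Rightarrow> real) \<Rightarrow> real^2 \<Rightarrow> real^2" where
  "perp_grad f x = (\<chi> j. if j = 1 then - pd f 2 x else pd f 1 x)"

definition divergence :: "(real^2 \<Rightarrow> real^2) \<Rightarrow> real^2 \<Rightarrow> real" where
  "divergence v x = pd (\<lambda>y. v y $ 1) 1 x + pd (\<lambda>y. v y $ 2) 2 x"

text \<open>Flow of a time-dependent vector field v on a time interval I, in the (Caratheodory)
  integral sense: phi(t) = x + int_s^t v(phi(r), r) dr for all t in I.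
  flow I v x s t is the value at time t of the (unique) solution through x at time s.\<close>
definition is_sol :: "real set \<Rightarrow> (real^2 \<Rightarrow> real \<Rightarrow> real^2) \<Rightarrow> real^2 \<Rightarrow> real \<Rightarrow> (real \<Rightarrow> real^2) \<Rightarrow> bool" where
  "is_sol I v x s \<phi> \<longleftrightarrow> s \<in> I \<and> (\<forall>t\<in>I.
      (s \<le> t \<longrightarrow> ((\<lambda>r. v (\<phi> r) r) has_integral (\<phi> t - x)) {s..t}) \<and>
      (t \<le> s \<longrightarrow> ((\<lambda>r. v (\<phi> r) r) has_integral (x - \<phi> t)) {t..s}))"

definition flow :: "real set \<Rightarrow> (real^2 \<Rightarrow> real \<Rightarrow> real^2) \<Rightarrow> real^2 \<Rightarrow> real \<Rightarrow> real \<Rightarrow> real^2" where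
  "flow I v x s t = (THE y. \<exists>\<phi>. is_sol I v x s \<phi> \<and> \<phi> t = y)"

end

(* The fields U and ybar are smooth and periodic in space, hence globally Lipschitz, so their
   flows exist (Picard iteration) and are unique (an exponentially weighted Gronwall estimate).
   On each step [tc (j - 1), tc j] both fields are odd in time about the midpoint, so both flows
   return to their starting point there, and outside the control intervals U coincides with ybar.
   Hence at time ta i the U-flow of x equals the ybar-flow of x, which the hypothesis on ybar
   places at x + S i modulo the lattice as soon as one of the two trajectories is near the
   square O.  On [ta i, tb i] the field U is perp_grad (chi * phistar (. - S i)), which agrees
   with ustar (. - S i) wherever chi = 1; the smallness assumption keeps one of the two
   trajectories in that region, so by uniqueness they differ by a constant lattice vector. *)

theory Submission
  imports Defs
begin

section \<open>Integral solutions of non-autonomous ODEs\<close>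

definition integral_solution :: "real set \<Rightarrow> ('a::real_normed_vector \<Rightarrow> real \<Rightarrow> 'a) \<Rightarrow> (real \<Rightarrow> 'a) \<Rightarrow> bool" where
  "integral_solution I v \<phi> \<longleftrightarrow>
     (\<forall>p\<in>I. \<forall>q\<in>I. p \<le> q \<longrightarrow> ((\<lambda>r. v (\<phi> r) r) has_integral (\<phi> q - \<phi> p)) {p..q})"

lemma integral_solutionD:
  "integral_solution I v \<phi> \<Longrightarrow> p \<in> I \<Longrightarrow> q \<in> I \<Longrightarrow> p \<le> q \<Longrightarrow>
     ((\<lambda>r. v (\<phi> r) r) has_integral (\<phi> q - \<phi> p)) {p..q}"
  unfolding integral_solution_def by blast

lemma is_sol_initial: "is_sol I v x s \<phi> \<Longrightarrow> \<phi> s = x"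
  unfolding is_sol_def using has_integral_unique[OF _ has_integral_refl(2)] by fastforce

lemma has_integral_drop_head:
  fixes g :: "real \<Rightarrow> 'a::banach"
  assumes "(g has_integral A) {a..b}" "(g has_integral C) {a..c}" "a \<le> c" "c \<le> b"
  shows "(g has_integral (A - C)) {c..b}"
proof -
  obtain J where J: "(g has_integral J) {c..b}"
    using integrable_subinterval_real[of g a b c b] assms by (auto simp: integrable_on_def)
  have "A = C + J"
    using has_integral_unique[OF assms(1) has_integral_combine[OF assms(3,4,2) J]] .
  then show ?thesis using J by simp
qed

lemma has_integral_drop_tail:
  fixes g :: "real \<Rightarrow> 'a::banach"
  assumes "(g has_integral A) {a..b}" "(g has_integral C) {c..b}" "a \<le> c" "c \<le> b"
  shows "(g has_integral (A - C)) {a..c}"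
proof -
  obtain J where J: "(g has_integral J) {a..c}"
    using integrable_subinterval_real[of g a b a c] assms by (auto simp: integrable_on_def)
  have "A = J + C"
    using has_integral_unique[OF assms(1) has_integral_combine[OF assms(3,4) J assms(2)]] .
  then show ?thesis using J by simp
qed

lemma is_sol_imp_integral_solution:
  assumes sol: "is_sol I v x s \<phi>" and I: "is_interval I"
  shows "integral_solution I v \<phi>"
  unfolding integral_solution_def
proof (intro ballI impI)
  fix p q assume pq: "p \<in> I" "q \<in> I" "p \<le> q"
  have x: "\<phi> s = x" by (rule is_sol_initial[OF sol])
  have fwd: "\<And>t. t \<in> I \<Longrightarrow> s \<le> t \<Longrightarrow> ((\<lambda>r. v (\<phi> r) r) has_integral (\<phi> t - x)) {s..t}"
   and bwd: "\<And>t. t \<in> I \<Longrightarrow> t \<le> s \<Longrightarrow> ((\<lambda>r. v (\<phi> r) r) has_integral (x - \<phi> t)) {t..s}"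
    using sol unfolding is_sol_def by auto
  consider "s \<le> p" | "q \<le> s" | "p \<le> s" "s \<le> q" using pq by linarith
  then show "((\<lambda>r. v (\<phi> r) r) has_integral (\<phi> q - \<phi> p)) {p..q}"
  proof cases
    case 1
    then show ?thesis using has_integral_drop_head[OF fwd[OF pq(2)] fwd[OF pq(1)]] pq by simp
  next
    case 2
    then show ?thesis using has_integral_drop_tail[OF bwd[OF pq(1)] bwd[OF pq(2)]] pq by simp
  next
    case 3
    then show ?thesis using has_integral_combine[OF 3 bwd[OF pq(1) 3(1)] fwd[OF pq(2) 3(2)]] by simp
  qed
qed

lemma integral_solution_imp_is_sol:
  "integral_solution I v \<phi> \<Longrightarrow> s \<in> I \<Longrightarrow> is_sol I v (\<phi> s) s \<phi>"
  unfolding integral_solution_def is_sol_def by auto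

lemma integral_solution_subset: "integral_solution I v \<phi> \<Longrightarrow> J \<subseteq> I \<Longrightarrow> integral_solution J v \<phi>"
  unfolding integral_solution_def by blast

lemma integral_solution_cong_finite:
  assumes sol: "integral_solution I v \<phi>" and I: "is_interval I" and "finite F"
    and eq: "\<And>t. t \<in> I \<Longrightarrow> t \<notin> F \<Longrightarrow> v (\<phi> t) t = w (\<phi> t) t"
  shows "integral_solution I w \<phi>"
  unfolding integral_solution_def
proof (intro ballI impI)
  fix p q assume pq: "p \<in> I" "q \<in> I" "p \<le> q"
  have sub: "{p..q} \<subseteq> I" using I pq by (meson atLeastAtMost_iff is_interval_1 subsetI)
  show "((\<lambda>r. w (\<phi> r) r) has_integral (\<phi> q - \<phi> p)) {p..q}"
  proof (rule has_integral_spike_finite[OF \<open>finite F\<close> _ integral_solutionD[OF sol pq]])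
    fix r assume "r \<in> {p..q} - F"
    then show "w (\<phi> r) r = v (\<phi> r) r" using eq sub by auto
  qed
qed

lemma integral_solution_translate:
  assumes "integral_solution I v \<phi>" "is_interval I" "\<And>p t. t \<in> I \<Longrightarrow> v (p + w) t = v p t"
  shows "integral_solution I v (\<lambda>t. \<phi> t + w)"
  using integral_solution_cong_finite[OF assms(1,2) finite.emptyI, of "\<lambda>p t. v (p + w) t"] assms(3)
  unfolding integral_solution_def by simp

lemma integral_solution_shift_time:
  assumes "integral_solution {a..a+T} v \<phi>"
  shows "integral_solution {0..T} (\<lambda>p \<tau>. v p (a + \<tau>)) (\<lambda>\<tau>. \<phi> (a + \<tau>))"
  unfolding integral_solution_def
proof (intro ballI impI)
  fix p q :: real assume pq: "p \<in> {0..T}" "q \<in> {0..T}" "p \<le> q"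
  have "((\<lambda>r. v (\<phi> r) r) has_integral (\<phi> (a + q) - \<phi> (a + p))) {a + p..a + q}"
    using integral_solutionD[OF assms] pq by simp
  from has_integral_shift_real_ivl[OF this, of a]
  show "((\<lambda>r. v (\<phi> (a + r)) (a + r)) has_integral (\<phi> (a + q) - \<phi> (a + p))) {p..q}"
    by (simp add: add.commute)
qed

lemma integral_solution_reflect_time:
  assumes "integral_solution {a..e} v \<phi>"
  shows "integral_solution {c - e..c - a} (\<lambda>p t. - v p (c - t)) (\<lambda>t. \<phi> (c - t))"
  unfolding integral_solution_def
proof (intro ballI impI)
  fix p q :: real assume pq: "p \<in> {c - e..c - a}" "q \<in> {c - e..c - a}" "p \<le> q"
  have "((\<lambda>r. v (\<phi> r) r) has_integral (\<phi> (c - p) - \<phi> (c - q))) {c - q..c - p}"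
    using integral_solutionD[OF assms] pq by simp
  then have "((\<lambda>r. v (\<phi> (- r)) (- r)) has_integral (\<phi> (c - p) - \<phi> (c - q))) {p - c..q - c}"
    by (subst (asm) has_integral_reflect_real[symmetric]) simp
  from has_integral_neg[OF has_integral_shift_real_ivl[OF this, of "- c"]]
  show "((\<lambda>r. - v (\<phi> (c - r)) (c - r)) has_integral (\<phi> (c - q) - \<phi> (c - p))) {p..q}"
    by simp
qed

lemma continuous_on_integral_solution:
  fixes \<phi> :: "real \<Rightarrow> 'a::banach"
  assumes sol: "integral_solution {a..e} v \<phi>" and "a \<le> e"
  shows "continuous_on {a..e} \<phi>"
proof -
  have H: "\<And>t. t \<in> {a..e} \<Longrightarrow> ((\<lambda>r. v (\<phi> r) r) has_integral (\<phi> t - \<phi> a)) {a..t}"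
    using integral_solutionD[OF sol] \<open>a \<le> e\<close> by simp
  have "continuous_on {a..e} (\<lambda>t. \<phi> a + integral {a..t} (\<lambda>r. v (\<phi> r) r))"
    using H[of e] \<open>a \<le> e\<close> by (intro continuous_intros indefinite_integral_continuous_1) auto
  moreover have "\<phi> a + integral {a..t} (\<lambda>r. v (\<phi> r) r) = \<phi> t" if "t \<in> {a..e}" for t
    using integral_unique[OF H[OF that]] by simp
  ultimately show ?thesis by (rule continuous_on_eq)
qed

lemma norm_integral_exp_weighted_le:
  fixes f :: "real \<Rightarrow> 'a::banach"
  assumes K: "0 < K" and at: "a \<le> t" and f: "f integrable_on {a..t}"
    and bound: "\<And>r. r \<in> {a..t} \<Longrightarrow> norm (f r) \<le> K * D * exp (2 * K * (r - a))"
  shows "norm (integral {a..t} f) \<le> D / 2 * exp (2 * K * (t - a))"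
proof -
  have "norm (f a) \<le> K * D" using bound[of a] at by simp
  then have "0 \<le> K * D" using norm_ge_zero order_trans by blast
  then have D: "0 \<le> D" using K by (simp add: zero_le_mult_iff)
  have g: "((\<lambda>r. K * D * exp (2 * K * (r - a))) has_integral
             (D / 2 * exp (2 * K * (t - a)) - D / 2 * exp (2 * K * (a - a)))) {a..t}"
    by (rule fundamental_theorem_of_calculus[OF at])
      (use K in \<open>auto intro!: derivative_eq_intros simp: has_real_derivative_iff_has_vector_derivative[symmetric]\<close>)
  have "norm (integral {a..t} f) \<le> integral {a..t} (\<lambda>r. K * D * exp (2 * K * (r - a)))"
    using bound by (intro integral_norm_bound_integral f has_integral_integrable[OF g])
  also have "\<dots> \<le> D / 2 * exp (2 * K * (t - a))"
    using integral_unique[OF g] D by simp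
  finally show ?thesis .
qed

lemma integral_solution_unique_forward:
  fixes \<phi> \<psi> :: "real \<Rightarrow> 'a::banach"
  assumes ae: "a \<le> e" and K: "0 < K"
    and lip: "\<And>t p q. t \<in> {a..e} \<Longrightarrow> norm (v p t - v q t) \<le> K * norm (p - q)"
    and \<phi>: "integral_solution {a..e} v \<phi>" and \<psi>: "integral_solution {a..e} v \<psi>"
    and init: "\<phi> a = \<psi> a" and t: "t \<in> {a..e}"
  shows "\<phi> t = \<psi> t"
proof -
  \<comment> \<open>The integral equation bounds the weighted distance \<open>\<delta>\<close> by half of its maximum.\<close>
  define \<delta> where "\<delta> r = norm (\<phi> r - \<psi> r) / exp (2 * K * (r - a))" for r
  have "continuous_on {a..e} \<delta>"
    unfolding \<delta>_def using continuous_on_integral_solution[OF \<phi> ae] continuous_on_integral_solution[OF \<psi> ae]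
    by (intro continuous_intros) auto
  then obtain t0 where t0: "t0 \<in> {a..e}" and max: "\<And>r. r \<in> {a..e} \<Longrightarrow> \<delta> r \<le> \<delta> t0"
    using continuous_attains_sup[OF compact_Icc] ae by (metis atLeastAtMost_iff empty_iff order_refl)
  have norm_eq: "norm (\<phi> r - \<psi> r) = \<delta> r * exp (2 * K * (r - a))" for r
    by (simp add: \<delta>_def)
  have half: "\<delta> r \<le> \<delta> t0 / 2" if r: "r \<in> {a..e}" for r
  proof -
    have diff: "((\<lambda>u. v (\<phi> u) u - v (\<psi> u) u) has_integral (\<phi> r - \<psi> r)) {a..r}"
      using has_integral_diff[OF integral_solutionD[OF \<phi>] integral_solutionD[OF \<psi>], of a r] init r by simp
    have "norm (v (\<phi> u) u - v (\<psi> u) u) \<le> K * \<delta> t0 * exp (2 * K * (u - a))" if "u \<in> {a..r}" for u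
    proof -
      have u: "u \<in> {a..e}" using that r by simp
      have "norm (v (\<phi> u) u - v (\<psi> u) u) \<le> K * (\<delta> u * exp (2 * K * (u - a)))"
        using lip[OF u, of "\<phi> u" "\<psi> u"] by (simp only: norm_eq)
      also have "\<dots> \<le> K * (\<delta> t0 * exp (2 * K * (u - a)))"
        using max[OF u] K by (intro mult_left_mono mult_right_mono) auto
      finally show ?thesis by (simp add: mult.assoc)
    qed
    then have "norm (\<phi> r - \<psi> r) \<le> \<delta> t0 / 2 * exp (2 * K * (r - a))"
      using norm_integral_exp_weighted_le[OF K _ has_integral_integrable[OF diff]] integral_unique[OF diff] r
      by simp
    then show ?thesis unfolding norm_eq by simp
  qed
  have "\<delta> t0 \<le> 0" using half[OF t0] by simp
  then have "\<delta> t \<le> 0" using max[OF t] by simp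
  then show ?thesis unfolding \<delta>_def by (simp add: divide_le_0_iff)
qed

lemma integral_solution_unique_backward:
  fixes \<phi> \<psi> :: "real \<Rightarrow> 'a::banach"
  assumes ae: "a \<le> e" and K: "0 < K"
    and lip: "\<And>t p q. t \<in> {a..e} \<Longrightarrow> norm (v p t - v q t) \<le> K * norm (p - q)"
    and \<phi>: "integral_solution {a..e} v \<phi>" and \<psi>: "integral_solution {a..e} v \<psi>"
    and final: "\<phi> e = \<psi> e" and t: "t \<in> {a..e}"
  shows "\<phi> t = \<psi> t"
proof -
  have lip': "norm (- v p (0 - t) - - v q (0 - t)) \<le> K * norm (p - q)" if "t \<in> {0 - e..0 - a}" for t p q
    using lip[of "- t" p q] that by (simp add: norm_minus_commute[of "v p (- t)"])
  have "(\<lambda>t. \<phi> (0 - t)) (- t) = (\<lambda>t. \<psi> (0 - t)) (- t)"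
    by (rule integral_solution_unique_forward[OF _ K lip'
          integral_solution_reflect_time[OF \<phi>] integral_solution_reflect_time[OF \<psi>]])
      (use ae final t in auto)
  then show ?thesis by simp
qed

lemma integral_solution_unique:
  fixes \<phi> \<psi> :: "real \<Rightarrow> 'a::banach"
  assumes I: "is_interval I" and K: "0 < K"
    and lip: "\<And>t p q. t \<in> I \<Longrightarrow> norm (v p t - v q t) \<le> K * norm (p - q)"
    and \<phi>: "integral_solution I v \<phi>" and \<psi>: "integral_solution I v \<psi>"
    and s: "s \<in> I" and init: "\<phi> s = \<psi> s" and t: "t \<in> I"
  shows "\<phi> t = \<psi> t"
proof (cases "s \<le> t")
  case True
  have sub: "{s..t} \<subseteq> I" using I s t by (meson atLeastAtMost_iff is_interval_1 subsetI)
  show ?thesis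
    by (rule integral_solution_unique_forward[OF True K _ integral_solution_subset[OF \<phi> sub]
          integral_solution_subset[OF \<psi> sub] init]) (use lip sub True in auto)
next
  case False
  have sub: "{t..s} \<subseteq> I" using I s t by (meson atLeastAtMost_iff is_interval_1 subsetI)
  show ?thesis
    by (rule integral_solution_unique_backward[of t s, OF _ K _ integral_solution_subset[OF \<phi> sub]
          integral_solution_subset[OF \<psi> sub] init]) (use lip sub False in auto)
qed

lemma integral_solution_unique_along:
  fixes \<phi> \<psi> :: "real \<Rightarrow> 'a::banach"
  assumes I: "is_interval I" and K: "0 < K"
    and lip: "\<And>t p q. t \<in> I \<Longrightarrow> norm (w p t - w q t) \<le> K * norm (p - q)"
    and \<phi>: "integral_solution I v \<phi>" and \<psi>: "integral_solution I w \<psi>"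
    and along: "\<And>t. t \<in> I \<Longrightarrow> v (\<phi> t) t = w (\<phi> t) t"
    and s: "s \<in> I" and init: "\<phi> s = \<psi> s" and t: "t \<in> I"
  shows "\<phi> t = \<psi> t"
proof -
  have w\<phi>: "integral_solution I w \<phi>" by (rule integral_solution_cong_finite[OF \<phi> I finite.emptyI]) (rule along)
  show ?thesis by (rule integral_solution_unique[OF I K lip w\<phi> \<psi> s init t])
qed

lemma flow_eqI:
  assumes I: "is_interval I" and K: "0 < K"
    and lip: "\<And>t p q. t \<in> I \<Longrightarrow> norm (v p t - v q t) \<le> K * norm (p - q)"
    and sol: "is_sol I v x s \<phi>" and t: "t \<in> I"
  shows "flow I v x s t = \<phi> t"
  unfolding flow_def
proof (rule the_equality)
  show "\<exists>\<psi>. is_sol I v x s \<psi> \<and> \<psi> t = \<phi> t" using sol by blast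
next
  fix y assume "\<exists>\<psi>. is_sol I v x s \<psi> \<and> \<psi> t = y"
  then obtain \<psi> where \<psi>: "is_sol I v x s \<psi>" "\<psi> t = y" by blast
  have "s \<in> I" using sol unfolding is_sol_def by simp
  have init: "\<psi> s = \<phi> s" using is_sol_initial[OF \<psi>(1)] is_sol_initial[OF sol] by simp
  have "\<psi> t = \<phi> t"
    by (rule integral_solution_unique[OF I K lip is_sol_imp_integral_solution[OF \<psi>(1) I]
          is_sol_imp_integral_solution[OF sol I] \<open>s \<in> I\<close> init t])
  then show "y = \<phi> t" using \<psi>(2) by simp
qed

lemma convergent_geometric_steps:
  fixes P :: "nat \<Rightarrow> 'a::banach"
  assumes steps: "\<And>n. norm (P (Suc n) - P n) \<le> c * (1/2) ^ n"
  shows "P \<longlonglongrightarrow> lim P" and "norm (lim P - P n) \<le> 2 * c * (1/2) ^ n"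
proof -
  define d where "d n = P (Suc n) - P n" for n
  have d_le: "norm (d (k + m)) \<le> c * (1/2) ^ m * (1/2) ^ k" for k m
    using steps[of "k + m"] by (simp add: d_def power_add mult_ac)
  have summable_bound: "summable (\<lambda>k. c * (1/2) ^ m * (1/2::real) ^ k)" for m
    by (intro summable_mult summable_geometric) simp
  have summable_tail: "summable (\<lambda>k. norm (d (k + m)))" for m
    by (rule summable_comparison_test[OF _ summable_bound[of m]]) (use d_le[of _ m] in simp)
  have sd: "summable d" using summable_norm_cancel[of d] summable_tail[of 0] by simp
  have P_eq: "P n = P 0 + (\<Sum>i<n. d i)" for n
    unfolding d_def sum_lessThan_telescope by simp
  have "(\<lambda>n. P 0 + (\<Sum>i<n. d i)) \<longlonglongrightarrow> P 0 + suminf d"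
    by (intro tendsto_add tendsto_const summable_LIMSEQ sd)
  then have "P \<longlonglongrightarrow> P 0 + suminf d" by (simp only: P_eq[symmetric])
  then have lim: "lim P = P 0 + suminf d" by (rule limI)
  then show "P \<longlonglongrightarrow> lim P" using \<open>P \<longlonglongrightarrow> P 0 + suminf d\<close> by simp
  have "lim P - P n = (\<Sum>k. d (k + n))"
    using lim P_eq[of n] suminf_split_initial_segment[OF sd, of n] by simp
  also have "norm \<dots> \<le> (\<Sum>k. norm (d (k + n)))" by (rule summable_norm[OF summable_tail])
  also have "\<dots> \<le> (\<Sum>k. c * (1/2) ^ n * (1/2) ^ k)"
    by (rule suminf_le[OF d_le summable_tail summable_bound])
  also have "\<dots> = 2 * c * (1/2) ^ n"
    using suminf_mult[OF summable_geometric[of "1/2::real"], of "c * (1/2) ^ n"] suminf_geometric[of "1/2::real"]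
    by simp
  finally show "norm (lim P - P n) \<le> 2 * c * (1/2) ^ n" .
qed

lemma uniform_limit_geometric:
  assumes "\<And>r n. r \<in> S \<Longrightarrow> norm (g r - f n r) \<le> C * (1/2) ^ n"
  shows "uniform_limit S f g sequentially"
proof (rule uniform_limitI)
  fix e :: real assume "0 < e"
  have "(\<lambda>n. C * (1/2) ^ n) \<longlonglongrightarrow> 0" by (intro tendsto_mult_right_zero LIMSEQ_power_zero) simp
  then have "\<forall>\<^sub>F n in sequentially. C * (1/2) ^ n < e" using \<open>0 < e\<close> by (simp add: order_tendsto_iff)
  then show "\<forall>\<^sub>F n in sequentially. \<forall>r\<in>S. dist (f n r) (g r) < e"
  proof eventually_elim
    case (elim n)
    show ?case
    proof
      fix r assume "r \<in> S"
      then have "norm (g r - f n r) \<le> C * (1/2) ^ n" by (rule assms)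
      then show "dist (f n r) (g r) < e" using elim by (simp add: dist_norm norm_minus_commute)
    qed
  qed
qed

lemma integral_tendsto_geometric:
  fixes f :: "nat \<Rightarrow> real \<Rightarrow> 'a::banach"
  assumes ab: "a \<le> b" and f: "\<And>n. f n integrable_on {a..b}" and g: "g integrable_on {a..b}"
    and close: "\<And>r n. r \<in> {a..b} \<Longrightarrow> norm (f n r - g r) \<le> C * (1/2) ^ n"
  shows "(\<lambda>n. integral {a..b} (f n)) \<longlonglongrightarrow> integral {a..b} g"
proof -
  have bound: "\<forall>n. norm (integral {a..b} (f n) - integral {a..b} g) \<le> C * (b - a) * (1/2) ^ n"
  proof
    fix n
    have "norm (integral {a..b} (\<lambda>r. f n r - g r)) \<le> integral {a..b} (\<lambda>r. C * (1/2) ^ n)"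
      using close by (intro integral_norm_bound_integral integrable_diff f g) auto
    then show "norm (integral {a..b} (f n) - integral {a..b} g) \<le> C * (b - a) * (1/2) ^ n"
      using ab by (simp add: integral_diff[OF f g] mult_ac)
  qed
  have "(\<lambda>n. C * (b - a) * (1/2::real) ^ n) \<longlonglongrightarrow> 0"
    by (intro tendsto_mult_right_zero LIMSEQ_power_zero) simp
  then have "(\<lambda>n. integral {a..b} (f n) - integral {a..b} g) \<longlonglongrightarrow> 0"
    by (rule Lim_null_comparison[OF always_eventually[OF bound]])
  then show ?thesis by (simp add: LIM_zero_iff)
qed

primrec picard_iter :: "('a::banach \<Rightarrow> real \<Rightarrow> 'a) \<Rightarrow> 'a \<Rightarrow> real \<Rightarrow> nat \<Rightarrow> real \<Rightarrow> 'a" where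
  "picard_iter v x s 0 = (\<lambda>t. x)"
| "picard_iter v x s (Suc n) = (\<lambda>t. x + integral {s..t} (\<lambda>r. v (picard_iter v x s n r) r))"

lemma picard_iter_start: "picard_iter v x s n s = x"
  by (cases n) simp_all

context
  fixes v :: "'a::banach \<Rightarrow> real \<Rightarrow> 'a" and x :: 'a and s K B :: real
  assumes K: "0 < K"
    and lip: "\<And>t p q. s \<le> t \<Longrightarrow> norm (v p t - v q t) \<le> K * norm (p - q)"
    and bnd: "\<And>t. s \<le> t \<Longrightarrow> norm (v x t) \<le> B"
    and int: "\<And>\<phi> T. s \<le> T \<Longrightarrow> continuous_on {s..T} \<phi> \<Longrightarrow> (\<lambda>r. v (\<phi> r) r) integrable_on {s..T}"
begin

lemma picard_iter_continuous_on: "s \<le> T \<Longrightarrow> continuous_on {s..T} (picard_iter v x s n)"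
proof (induction n)
  case (Suc n)
  then show ?case
    using int[OF Suc.prems Suc.IH[OF Suc.prems]]
    by (auto intro!: continuous_intros indefinite_integral_continuous_1)
qed simp

lemma picard_iter_integrable: "s \<le> T \<Longrightarrow> (\<lambda>r. v (picard_iter v x s n r) r) integrable_on {s..T}"
  using int picard_iter_continuous_on by blast

lemma picard_iter_step_le:
  "s \<le> t \<Longrightarrow> norm (picard_iter v x s (Suc n) t - picard_iter v x s n t)
     \<le> B / (2 * K) * (1/2) ^ n * exp (2 * K * (t - s))"
proof (induction n arbitrary: t)
  case 0
  have "norm (integral {s..t} (\<lambda>r. v x r)) \<le> (B / K) / 2 * exp (2 * K * (t - s))"
  proof (rule norm_integral_exp_weighted_le[OF K 0])
    show "(\<lambda>r. v x r) integrable_on {s..t}" using picard_iter_integrable[OF 0, of 0] by simp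
    show "norm (v x r) \<le> K * (B / K) * exp (2 * K * (r - s))" if "r \<in> {s..t}" for r
    proof -
      have "norm (v x r) \<le> B * 1" using bnd that by simp
      also have "\<dots> \<le> B * exp (2 * K * (r - s))"
        using that K order_trans[OF norm_ge_zero bnd[of r]] by (intro mult_left_mono) auto
      finally show ?thesis using K by simp
    qed
  qed
  then show ?case by simp
next
  case (Suc n)
  let ?P = "picard_iter v x s"
  have "?P (Suc (Suc n)) t - ?P (Suc n) t
      = integral {s..t} (\<lambda>r. v (?P (Suc n) r) r) - integral {s..t} (\<lambda>r. v (?P n r) r)"
    by (simp only: picard_iter.simps) simp
  also have "\<dots> = integral {s..t} (\<lambda>r. v (?P (Suc n) r) r - v (?P n r) r)"
    by (intro integral_diff[symmetric] picard_iter_integrable Suc.prems)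
  also have "norm \<dots> \<le> (B / (2 * K) * (1/2) ^ n) / 2 * exp (2 * K * (t - s))"
  proof (rule norm_integral_exp_weighted_le[OF K Suc.prems])
    show "(\<lambda>r. v (?P (Suc n) r) r - v (?P n r) r) integrable_on {s..t}"
      by (intro integrable_diff picard_iter_integrable Suc.prems)
    fix r assume r: "r \<in> {s..t}"
    have "norm (v (?P (Suc n) r) r - v (?P n r) r) \<le> K * norm (?P (Suc n) r - ?P n r)"
      using lip r by simp
    also have "\<dots> \<le> K * (B / (2 * K) * (1/2) ^ n * exp (2 * K * (r - s)))"
      by (intro mult_left_mono Suc.IH) (use r K in auto)
    finally show "norm (v (?P (Suc n) r) r - v (?P n r) r) \<le> K * (B / (2 * K) * (1/2) ^ n) * exp (2 * K * (r - s))"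
      by (simp only: mult.assoc)
  qed
  finally show ?case by simp
qed

lemma integral_solution_exists_forward:
  "\<exists>\<phi>. \<phi> s = x \<and> (\<forall>t\<ge>s. ((\<lambda>r. v (\<phi> r) r) has_integral (\<phi> t - x)) {s..t})"
proof -
  let ?P = "picard_iter v x s"
  define \<phi> where "\<phi> t = lim (\<lambda>n. ?P n t)" for t
  define C where "C t = B / K * exp (2 * K * (t - s))" for t
  have lim: "(\<lambda>n. ?P n t) \<longlonglongrightarrow> \<phi> t" and tail: "norm (\<phi> t - ?P n t) \<le> C t * (1/2) ^ n"
    if "s \<le> t" for t n
  proof -
    have steps: "norm (?P (Suc n) t - ?P n t) \<le> B / (2 * K) * exp (2 * K * (t - s)) * (1/2) ^ n" for n
      using picard_iter_step_le[OF that, of n] by (simp only: ac_simps)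
    have C: "C t = 2 * (B / (2 * K) * exp (2 * K * (t - s)))" unfolding C_def by simp
    show "(\<lambda>n. ?P n t) \<longlonglongrightarrow> \<phi> t" unfolding \<phi>_def by (rule convergent_geometric_steps(1)[OF steps])
    show "norm (\<phi> t - ?P n t) \<le> C t * (1/2) ^ n"
      unfolding \<phi>_def C by (rule convergent_geometric_steps(2)[OF steps])
  qed
  have "\<phi> s = x"
    unfolding \<phi>_def picard_iter_start by (rule limI[OF tendsto_const])
  moreover have "((\<lambda>r. v (\<phi> r) r) has_integral (\<phi> t - x)) {s..t}" if st: "s \<le> t" for t
  proof -
    have close: "norm (\<phi> r - ?P n r) \<le> C t * (1/2) ^ n" if "r \<in> {s..t}" for r n
    proof -
      have "C r \<le> C t"
        using that K order_trans[OF norm_ge_zero bnd[of s]] unfolding C_def by (intro mult_left_mono) auto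
      have "norm (\<phi> r - ?P n r) \<le> C r * (1/2) ^ n" using tail[of r n] that by simp
      also have "\<dots> \<le> C t * (1/2) ^ n" using \<open>C r \<le> C t\<close> by (rule mult_right_mono) simp
      finally show ?thesis .
    qed
    have "continuous_on {s..t} \<phi>"
      by (rule uniform_limit_theorem[OF _ uniform_limit_geometric[OF close]])
        (auto intro!: always_eventually picard_iter_continuous_on[OF st])
    then have ig: "(\<lambda>r. v (\<phi> r) r) integrable_on {s..t}" by (rule int[OF st])
    have "norm (v (?P n r) r - v (\<phi> r) r) \<le> K * C t * (1/2) ^ n" if "r \<in> {s..t}" for r n
    proof -
      have "norm (v (?P n r) r - v (\<phi> r) r) \<le> K * norm (\<phi> r - ?P n r)"
        using lip[of r "?P n r" "\<phi> r"] that by (simp add: norm_minus_commute)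
      also have "\<dots> \<le> K * (C t * (1/2) ^ n)" using close[OF that, of n] K by (intro mult_left_mono) auto
      finally show ?thesis by (simp only: mult.assoc)
    qed
    then have "(\<lambda>n. integral {s..t} (\<lambda>r. v (?P n r) r)) \<longlonglongrightarrow> integral {s..t} (\<lambda>r. v (\<phi> r) r)"
      by (rule integral_tendsto_geometric[OF st picard_iter_integrable[OF st] ig])
    moreover have "(\<lambda>n. integral {s..t} (\<lambda>r. v (?P n r) r)) \<longlonglongrightarrow> \<phi> t - x"
      using tendsto_diff[OF lim[OF st, THEN LIMSEQ_Suc] tendsto_const[of x]] by simp
    ultimately have "integral {s..t} (\<lambda>r. v (\<phi> r) r) = \<phi> t - x" by (rule LIMSEQ_unique)
    then show ?thesis using ig by (metis has_integral_integral)
  qed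
  ultimately show ?thesis by blast
qed

end

lemma is_sol_UNIV_exists:
  fixes v :: "real^2 \<Rightarrow> real \<Rightarrow> real^2"
  assumes K: "0 < K"
    and lip: "\<And>t p q. s \<le> t \<Longrightarrow> norm (v p t - v q t) \<le> K * norm (p - q)"
    and bnd: "\<And>t. s \<le> t \<Longrightarrow> norm (v x t) \<le> B"
    and int: "\<And>\<phi> T. s \<le> T \<Longrightarrow> continuous_on {s..T} \<phi> \<Longrightarrow> (\<lambda>r. v (\<phi> r) r) integrable_on {s..T}"
    and past: "\<And>p t. t \<le> s \<Longrightarrow> v p t = 0"
  shows "\<exists>\<phi>. is_sol UNIV v x s \<phi>"
proof -
  obtain \<phi> where \<phi>: "\<phi> s = x" "\<And>t. s \<le> t \<Longrightarrow> ((\<lambda>r. v (\<phi> r) r) has_integral (\<phi> t - x)) {s..t}"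
    using integral_solution_exists_forward[OF K lip bnd int] by blast
  define \<psi> where "\<psi> t = (if s \<le> t then \<phi> t else x)" for t
  have "is_sol UNIV v x s \<psi>"
    unfolding is_sol_def
  proof (intro conjI ballI impI)
    fix t assume "s \<le> t"
    then have "((\<lambda>r. v (\<phi> r) r) has_integral (\<psi> t - x)) {s..t}" using \<phi>(2) by (simp add: \<psi>_def)
    then show "((\<lambda>r. v (\<psi> r) r) has_integral (\<psi> t - x)) {s..t}"
      by (rule has_integral_eq[rotated]) (simp add: \<psi>_def)
  next
    fix t assume "t \<le> s"
    then have "((\<lambda>r. 0) has_integral (x - \<psi> t)) {t..s}" using \<phi>(1) by (auto simp: \<psi>_def)
    then show "((\<lambda>r. v (\<psi> r) r) has_integral (x - \<psi> t)) {t..s}"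
      by (rule has_integral_eq[rotated]) (simp add: past)
  qed simp
  then show ?thesis by blast
qed

lemma is_sol_Icc_exists:
  fixes v :: "real^2 \<Rightarrow> real \<Rightarrow> real^2"
  assumes se: "s \<le> e" and K: "0 < K"
    and lip: "\<And>t p q. t \<in> {s..e} \<Longrightarrow> norm (v p t - v q t) \<le> K * norm (p - q)"
    and bnd: "\<And>t. t \<in> {s..e} \<Longrightarrow> norm (v x t) \<le> B"
    and int: "\<And>\<phi> T. s \<le> T \<Longrightarrow> T \<le> e \<Longrightarrow> continuous_on {s..T} \<phi> \<Longrightarrow> (\<lambda>r. v (\<phi> r) r) integrable_on {s..T}"
  shows "\<exists>\<phi>. is_sol {s..e} v x s \<phi>"
proof -
  define w where "w p t = (if t \<le> e then v p t else 0)" for p t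
  have B: "0 \<le> B" using bnd[of s] se order_trans[OF norm_ge_zero] by simp
  have lip': "norm (w p t - w q t) \<le> K * norm (p - q)" if "s \<le> t" for t p q
    using lip[of t p q] that K by (simp add: w_def)
  have bnd': "norm (w x t) \<le> B" if "s \<le> t" for t
    using bnd[of t] that B by (simp add: w_def)
  have int': "(\<lambda>r. w (\<phi> r) r) integrable_on {s..T}" if sT: "s \<le> T" and \<phi>: "continuous_on {s..T} \<phi>" for \<phi> T
  proof (cases "T \<le> e")
    case True
    show ?thesis by (rule integrable_eq[OF int[OF sT True \<phi>]]) (use True in \<open>simp add: w_def\<close>)
  next
    case False
    have "(\<lambda>r. w (\<phi> r) r) integrable_on {s..e}"
      by (rule integrable_eq[OF int[OF se order_refl continuous_on_subset[OF \<phi>]]]) (use False in \<open>auto simp: w_def\<close>)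
    moreover have "((\<lambda>r. w (\<phi> r) r) has_integral 0) {e..T}"
    proof (rule has_integral_spike_finite[OF _ _ has_integral_0])
      show "finite {e}" by simp
      show "w (\<phi> r) r = 0" if "r \<in> {e..T} - {e}" for r using that by (simp add: w_def)
    qed
    ultimately show ?thesis
      using Henstock_Kurzweil_Integration.integrable_combine[of s e T] se False by (meson has_integral_integrable linorder_linear)
  qed
  obtain \<phi> where \<phi>: "\<phi> s = x" "\<And>t. s \<le> t \<Longrightarrow> ((\<lambda>r. w (\<phi> r) r) has_integral (\<phi> t - x)) {s..t}"
    using integral_solution_exists_forward[OF K lip' bnd' int'] by blast
  have "is_sol {s..e} v x s \<phi>"
    unfolding is_sol_def
  proof (intro conjI ballI impI)
    fix t assume t: "t \<in> {s..e}" "s \<le> t"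
    show "((\<lambda>r. v (\<phi> r) r) has_integral (\<phi> t - x)) {s..t}"
      by (rule has_integral_eq[OF _ \<phi>(2)[OF t(2)]]) (use t in \<open>simp add: w_def\<close>)
  next
    fix t assume "t \<in> {s..e}" "t \<le> s"
    then show "((\<lambda>r. v (\<phi> r) r) has_integral (x - \<phi> t)) {t..s}"
      using \<phi>(1) has_integral_refl(2)[of "\<lambda>r. v (\<phi> r) r" s] by simp
  qed (use se in simp)
  then show ?thesis by blast
qed

lemma integral_solution_odd_field_returns:
  fixes \<phi> :: "real \<Rightarrow> 'a::banach"
  assumes cd: "c \<le> d" and K: "0 < K"
    and lip: "\<And>t p q. t \<in> {c..d} \<Longrightarrow> norm (v p t - v q t) \<le> K * norm (p - q)"
    and odd: "\<And>p t. t \<in> {c..d} \<Longrightarrow> v p (c + d - t) = - v p t"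
    and sol: "integral_solution {c..d} v \<phi>"
  shows "\<phi> d = \<phi> c"
proof -
  \<comment> \<open>Reflected about the midpoint, the solution still solves the odd field on the second half and
    agrees with the original at the midpoint.\<close>
  define m where "m = (c + d) / 2"
  have sub: "{c..m} \<subseteq> {c..d}" using cd by (auto simp: m_def)
  have mid: "c + d - m = m" by (simp add: m_def field_simps)
  have reflected: "integral_solution {m..d} (\<lambda>p t. - v p (c + d - t)) (\<lambda>t. \<phi> (c + d - t))"
    using integral_solution_reflect_time[OF integral_solution_subset[OF sol sub], of "c + d"]
    unfolding mid add_diff_cancel_left' .
  have returned: "integral_solution {m..d} v (\<lambda>t. \<phi> (c + d - t))"
    by (rule integral_solution_cong_finite[OF reflected _ finite.emptyI])
      (use odd in \<open>auto simp: m_def\<close>)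
  have "(\<lambda>t. \<phi> (c + d - t)) d = \<phi> d"
  proof (rule integral_solution_unique_forward[OF _ K _ returned integral_solution_subset[OF sol]])
    show "(\<lambda>t. \<phi> (c + d - t)) m = \<phi> m" using mid by simp
  qed (use cd lip in \<open>auto simp: m_def\<close>)
  then show ?thesis by simp
qed

section \<open>Smooth and periodic functions on the torus\<close>

lemma iter_dd_append: "iter_dd (vs @ ws) f = iter_dd vs (iter_dd ws f)"
  by (induction vs) simp_all

lemma smooth_fun_differentiable: "smooth_fun f \<Longrightarrow> f differentiable (at x)"
  unfolding smooth_fun_def using iter_dd.simps(1)[of f] by metis

lemma smooth_fun_has_derivative: "smooth_fun f \<Longrightarrow> (f has_derivative frechet_derivative f (at x)) (at x)"
  using smooth_fun_differentiable frechet_derivative_works by blast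

lemma continuous_on_if_const:
  "continuous_on A f \<Longrightarrow> continuous_on A g \<Longrightarrow> continuous_on A (\<lambda>x. if P then f x else g x)"
  by (cases P) simp_all

lemma smooth_fun_continuous_on: "smooth_fun f \<Longrightarrow> continuous_on S f"
  using smooth_fun_differentiable differentiable_imp_continuous_within continuous_at_imp_continuous_on
  by blast

lemma smooth_fun_directional_derivative:
  assumes "smooth_fun f" shows "smooth_fun (\<lambda>x. frechet_derivative f (at x) w)"
  unfolding smooth_fun_def
proof (intro allI)
  fix vs x
  have "iter_dd vs (\<lambda>x. frechet_derivative f (at x) w) = iter_dd (vs @ [w]) f"
    by (simp add: iter_dd_append)
  then show "iter_dd vs (\<lambda>x. frechet_derivative f (at x) w) differentiable at x"
    using assms unfolding smooth_fun_def by simp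
qed

lemma frechet_derivative_translation_invariant:
  fixes f :: "'a::real_normed_vector \<Rightarrow> 'b::real_normed_vector"
  assumes inv: "\<And>y. f (y + c) = f y" and diff: "f differentiable (at (x + c))"
  shows "frechet_derivative f (at (x + c)) = frechet_derivative f (at x)"
proof -
  define D where "D = frechet_derivative f (at (x + c))"
  have fd: "(f has_derivative D) (at (x + c))" unfolding D_def using diff frechet_derivative_works by blast
  have "((\<lambda>y. y + c) has_derivative (\<lambda>h. h)) (at x)" by (auto intro!: derivative_eq_intros)
  from has_derivative_compose[OF this, of f D] fd have "((\<lambda>y. f (y + c)) has_derivative D) (at x)" by simp
  then have "(f has_derivative D) (at x)" using inv by simp
  then have "D = frechet_derivative f (at x)" by (rule frechet_derivative_at)
  then show ?thesis unfolding D_def .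
qed

lemma lat2_add:
  assumes "v \<in> lat2" "w \<in> lat2" shows "v + w \<in> lat2"
  unfolding lat2_def
proof (intro CollectI allI)
  fix j
  obtain m n :: int where "v $ j = 2 * pi * of_int m" "w $ j = 2 * pi * of_int n"
    using assms unfolding lat2_def by blast
  then show "\<exists>k::int. (v + w) $ j = 2 * pi * of_int k" by (intro exI[of _ "m + n"]) (simp add: algebra_simps)
qed

lemma lat2_uminus:
  assumes "v \<in> lat2" shows "- v \<in> lat2"
  unfolding lat2_def
proof (intro CollectI allI)
  fix j
  obtain m :: int where "v $ j = 2 * pi * of_int m" using assms unfolding lat2_def by blast
  then show "\<exists>k::int. (- v) $ j = 2 * pi * of_int k" by (intro exI[of _ "- m"]) simp
qed

lemma lat2_diff: "v \<in> lat2 \<Longrightarrow> w \<in> lat2 \<Longrightarrow> v - w \<in> lat2"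
  using lat2_add[of v "- w"] lat2_uminus[of w] by simp

lemma sin_add_lat2:
  assumes "v \<in> lat2" shows "sin (x + v $ j) = sin x"
proof -
  obtain m :: int where "v $ j = 2 * pi * of_int m" using assms unfolding lat2_def by blast
  then show ?thesis by (simp add: sin_add)
qed

lemma cos_add_lat2:
  assumes "v \<in> lat2" shows "cos (x + v $ j) = cos x"
proof -
  obtain m :: int where "v $ j = 2 * pi * of_int m" using assms unfolding lat2_def by blast
  then show ?thesis by (simp add: cos_add)
qed

lemma lat2_translate_into_cell: "\<exists>v\<in>lat2. y + v \<in> cbox 0 (\<chi> j. 2 * pi)"
proof
  define v :: "real^2" where "v = (\<chi> j. - (2 * pi) * of_int \<lfloor>y $ j / (2 * pi)\<rfloor>)"
  show "v \<in> lat2" unfolding lat2_def v_def by (auto intro!: exI[of _ "- \<lfloor>y $ j / (2 * pi)\<rfloor>" for j])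
  show "y + v \<in> cbox 0 (\<chi> j. 2 * pi)"
    unfolding mem_box_cart
  proof
    fix j
    have p: "0 < 2 * pi" by simp
    have "2 * pi * of_int \<lfloor>y $ j / (2 * pi)\<rfloor> \<le> 2 * pi * (y $ j / (2 * pi))"
      using mult_left_mono[OF of_int_floor_le[of "y $ j / (2 * pi)"], of "2 * pi"] p by linarith
    moreover have "2 * pi * (y $ j / (2 * pi)) < 2 * pi * (of_int \<lfloor>y $ j / (2 * pi)\<rfloor> + 1)"
      using mult_strict_left_mono[OF real_of_int_floor_add_one_gt[of "y $ j / (2 * pi)"] p] .
    ultimately show "(0::real^2) $ j \<le> (y + v) $ j \<and> (y + v) $ j \<le> (\<chi> j. 2 * pi) $ j"
      unfolding v_def using p by (simp add: algebra_simps)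
  qed
qed

lemma bounded_periodic_in_space:
  fixes g :: "(real^2) \<times> real \<Rightarrow> 'b::real_normed_vector"
  assumes g: "continuous_on UNIV g" and per: "\<And>y t v. v \<in> lat2 \<Longrightarrow> g (y + v, t) = g (y, t)"
    and T: "compact T"
  shows "\<exists>B. \<forall>y. \<forall>t\<in>T. norm (g (y, t)) \<le> B"
proof -
  have "compact (g ` (cbox 0 (\<chi> j. 2 * pi) \<times> T))"
    by (rule compact_continuous_image[OF continuous_on_subset[OF g] compact_Times[OF compact_cbox T]]) simp
  then obtain B where B: "\<And>z. z \<in> cbox 0 (\<chi> j. 2 * pi) \<times> T \<Longrightarrow> norm (g z) \<le> B"
    using compact_imp_bounded bounded_iff by (metis image_eqI)
  have "norm (g (y, t)) \<le> B" if "t \<in> T" for y t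
  proof -
    obtain v where v: "v \<in> lat2" "y + v \<in> cbox 0 (\<chi> j. 2 * pi)" using lat2_translate_into_cell by blast
    then show ?thesis using B[of "(y + v, t)"] that per[OF v(1)] by simp
  qed
  then show ?thesis by blast
qed

lemma periodic_fun_bounded:
  fixes f :: "real^2 \<Rightarrow> 'b::real_normed_vector"
  assumes "continuous_on UNIV f" "periodic_fun f"
  shows "\<exists>B. \<forall>y. norm (f y) \<le> B"
proof -
  have "\<exists>B. \<forall>y. \<forall>t\<in>{0::real}. norm ((\<lambda>p. f (fst p)) (y, t)) \<le> B"
    by (rule bounded_periodic_in_space)
      (use assms in \<open>auto simp: periodic_fun_def intro!: continuous_on_compose2[OF assms(1)] continuous_intros\<close>)
  then show ?thesis by auto
qed

lemma periodic_fun_directional_derivative: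
  fixes f :: "real^2 \<Rightarrow> real"
  assumes "smooth_fun f" "periodic_fun f"
  shows "periodic_fun (\<lambda>x. frechet_derivative f (at x) w)"
  unfolding periodic_fun_def
proof (intro allI impI)
  fix x v assume "v \<in> lat2"
  then have "frechet_derivative f (at (x + v)) = frechet_derivative f (at x)"
    using assms smooth_fun_differentiable
    by (intro frechet_derivative_translation_invariant) (auto simp: periodic_fun_def)
  then show "frechet_derivative f (at (x + v)) w = frechet_derivative f (at x) w" by simp
qed

lemma lipschitz_of_partial_derivative_bound:
  fixes f :: "real^2 \<Rightarrow> 'b::real_normed_vector"
  assumes d: "\<And>x. (f has_derivative f' x) (at x)"
    and B: "\<And>x j. norm (f' x (axis j 1)) \<le> B"
  shows "norm (f p - f q) \<le> (2 * B) * norm (p - q)"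
proof (rule differentiable_bound[of UNIV f f'])
  fix x :: "real^2"
  show "(f has_derivative f' x) (at x within UNIV)" using d by simp
  have lin: "linear (f' x)" using d has_derivative_linear by blast
  show "onorm (f' x) \<le> 2 * B"
  proof (rule onorm_le)
    fix h :: "real^2"
    have "h = (\<Sum>i\<in>UNIV. h $ i *\<^sub>R axis i 1)"
      using basis_expansion[of h] by (simp add: scalar_mult_eq_scaleR)
    then have "f' x h = (\<Sum>i\<in>UNIV. h $ i *\<^sub>R f' x (axis i 1))"
      using linear_sum[OF lin] linear_scale[OF lin] by (metis (no_types, lifting) sum.cong)
    then have "f' x h = h $ 1 *\<^sub>R f' x (axis 1 1) + h $ 2 *\<^sub>R f' x (axis 2 1)" by (simp add: sum_2)
    then have "norm (f' x h) \<le> \<bar>h $ 1\<bar> * norm (f' x (axis 1 1)) + \<bar>h $ 2\<bar> * norm (f' x (axis 2 1))"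
      by (metis norm_scaleR norm_triangle_ineq)
    also have "\<dots> \<le> norm h * B + norm h * B"
      by (intro add_mono mult_mono component_le_norm_cart B) auto
    finally show "norm (f' x h) \<le> 2 * B * norm h" by simp
  qed
qed auto

lemma smooth_periodic_bounded:
  fixes f :: "real^2 \<Rightarrow> real"
  assumes "smooth_fun f" "periodic_fun f"
  shows "\<exists>B. \<forall>y. \<bar>f y\<bar> \<le> B"
  using periodic_fun_bounded[OF smooth_fun_continuous_on[OF assms(1)] assms(2)] by simp

lemma smooth_periodic_lipschitz:
  fixes f :: "real^2 \<Rightarrow> real"
  assumes f: "smooth_fun f" "periodic_fun f"
  shows "\<exists>L. \<forall>p q. \<bar>f p - f q\<bar> \<le> L * norm (p - q)"
proof -
  have "\<exists>B. \<forall>y. norm (frechet_derivative f (at y) (axis j 1)) \<le> B" for j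
    by (rule periodic_fun_bounded[OF smooth_fun_continuous_on[OF smooth_fun_directional_derivative[OF f(1)]]
          periodic_fun_directional_derivative[OF f]])
  then obtain B1 B2 where B1: "\<forall>y. norm (frechet_derivative f (at y) (axis 1 1)) \<le> B1"
    and B2: "\<forall>y. norm (frechet_derivative f (at y) (axis 2 1)) \<le> B2" by metis
  have "norm (frechet_derivative f (at y) (axis j 1)) \<le> max B1 B2" for y j
    using B1 B2 exhaust_2[of j] by (auto intro: max.coboundedI1 max.coboundedI2)
  then have "norm (f p - f q) \<le> (2 * max B1 B2) * norm (p - q)" for p q
    by (rule lipschitz_of_partial_derivative_bound[OF smooth_fun_has_derivative[OF f(1)]])
  then show ?thesis by auto
qed

lemma infdist_translation:
  fixes y c :: "'a::real_normed_vector"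
  shows "infdist y ((\<lambda>z. z + c) ` A) = infdist (y - c) A"
proof (cases "A = {}")
  case False
  then show ?thesis by (simp add: infdist_def image_image dist_norm algebra_simps)
qed (simp add: infdist_def)

lemma tsquare_translate_lat2: "v \<in> lat2 \<Longrightarrow> (\<lambda>z. z + v) ` tsquare c L = tsquare c L"
proof -
  assume v: "v \<in> lat2"
  have shift: "z + w \<in> tsquare c L" if z: "z \<in> tsquare c L" and w: "w \<in> lat2" for z w
  proof -
    obtain u where "u \<in> lat2" "z + u \<in> box c (c + (\<chi> j. L))" using z unfolding tsquare_def by blast
    then show ?thesis unfolding tsquare_def using lat2_diff[OF _ w]
      by (intro CollectI bexI[of _ "u - w"]) (auto simp: algebra_simps)
  qed
  have "z - v \<in> tsquare c L" if "z \<in> tsquare c L" for z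
    using shift[OF that lat2_uminus[OF v]] by simp
  then have "z \<in> (\<lambda>z. z + v) ` tsquare c L" if "z \<in> tsquare c L" for z
    using that by (intro rev_image_eqI[of "z - v"]) simp_all
  then show ?thesis using shift[OF _ v] by blast
qed

lemma infdist_tsquare_translate_lat2: "v \<in> lat2 \<Longrightarrow> infdist (y + v) (tsquare c L) = infdist y (tsquare c L)"
  using infdist_translation[of "y + v" v "tsquare c L"] tsquare_translate_lat2[of v c L] by simp

lemma pd_locally_constant:
  assumes "open V" "y \<in> V" "\<And>z. z \<in> V \<Longrightarrow> f z = a"
  shows "pd f k y = 0"
proof -
  have "(f has_derivative (\<lambda>h. 0)) (at y)"
    by (rule has_derivative_transform_within_open[OF has_derivative_const assms(1,2)]) (use assms(3) in simp)
  then show ?thesis unfolding pd_def by (simp add: frechet_derivative_at[symmetric])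
qed

section \<open>Trigonometric stream functions and uniformly Lipschitz families\<close>

definition trig_stream :: "(real \<Rightarrow> real) \<Rightarrow> (real \<Rightarrow> real) \<Rightarrow> (real \<Rightarrow> real) \<Rightarrow> (real \<Rightarrow> real) \<Rightarrow>
    real \<Rightarrow> real^2 \<Rightarrow> real^2 \<Rightarrow> real" where
  "trig_stream a1 a2 a3 a4 \<tau> S w =
     a1 \<tau> * sin (w$1 - S$1) + a2 \<tau> * sin (w$2 - S$2) + a3 \<tau> * cos (w$1 - S$1) + a4 \<tau> * cos (w$2 - S$2)"

definition trig_stream_d1 :: "(real \<Rightarrow> real) \<Rightarrow> (real \<Rightarrow> real) \<Rightarrow> (real \<Rightarrow> real) \<Rightarrow> (real \<Rightarrow> real) \<Rightarrow>
    real \<Rightarrow> real^2 \<Rightarrow> real^2 \<Rightarrow> real" where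
  "trig_stream_d1 a1 a2 a3 a4 \<tau> S w = a1 \<tau> * cos (w$1 - S$1) - a3 \<tau> * sin (w$1 - S$1)"

definition trig_stream_d2 :: "(real \<Rightarrow> real) \<Rightarrow> (real \<Rightarrow> real) \<Rightarrow> (real \<Rightarrow> real) \<Rightarrow> (real \<Rightarrow> real) \<Rightarrow>
    real \<Rightarrow> real^2 \<Rightarrow> real^2 \<Rightarrow> real" where
  "trig_stream_d2 a1 a2 a3 a4 \<tau> S w = a2 \<tau> * cos (w$2 - S$2) - a4 \<tau> * sin (w$2 - S$2)"

lemma trig_stream_has_derivative:
  "((\<lambda>w. trig_stream a1 a2 a3 a4 \<tau> S w) has_derivative
     (\<lambda>h. trig_stream_d1 a1 a2 a3 a4 \<tau> S z * h$1 + trig_stream_d2 a1 a2 a3 a4 \<tau> S z * h$2)) (at z)"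
proof -
  have d: "((\<lambda>w::real^2. w$j - S$j) has_derivative (\<lambda>h. h$j)) (at z)" for j
    using has_derivative_diff[OF bounded_linear_imp_has_derivative[OF bounded_linear_vec_nth]
        has_derivative_const[of "S$j"]] by simp
  show ?thesis unfolding trig_stream_def trig_stream_d1_def trig_stream_d2_def
    by (rule derivative_eq_intros d refl | simp)+ (simp add: algebra_simps)
qed

lemma perp_grad_cutoff_trig_stream:
  assumes chi: "smooth_fun chi"
  shows "perp_grad (\<lambda>w. chi w * trig_stream a1 a2 a3 a4 \<tau> S w) z =
    (\<chi> j. if j = 1 then - (pd chi 2 z * trig_stream a1 a2 a3 a4 \<tau> S z + chi z * trig_stream_d2 a1 a2 a3 a4 \<tau> S z)
          else pd chi 1 z * trig_stream a1 a2 a3 a4 \<tau> S z + chi z * trig_stream_d1 a1 a2 a3 a4 \<tau> S z)"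
proof -
  have "((\<lambda>w. chi w * trig_stream a1 a2 a3 a4 \<tau> S w) has_derivative
     (\<lambda>h. chi z * (trig_stream_d1 a1 a2 a3 a4 \<tau> S z * h$1 + trig_stream_d2 a1 a2 a3 a4 \<tau> S z * h$2)
        + frechet_derivative chi (at z) h * trig_stream a1 a2 a3 a4 \<tau> S z)) (at z)"
    by (rule has_derivative_mult[OF smooth_fun_has_derivative[OF chi] trig_stream_has_derivative])
  from frechet_derivative_at[OF this, symmetric] show ?thesis
    unfolding perp_grad_def pd_def by (simp add: axis_def vec_eq_iff algebra_simps)
qed

lemma perp_grad_trig_stream:
  "perp_grad (\<lambda>w. trig_stream a1 a2 a3 a4 \<tau> S w) z =
    (\<chi> j. if j = 1 then - trig_stream_d2 a1 a2 a3 a4 \<tau> S z else trig_stream_d1 a1 a2 a3 a4 \<tau> S z)"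
  using frechet_derivative_at[OF trig_stream_has_derivative, symmetric]
  unfolding perp_grad_def pd_def by (simp add: axis_def vec_eq_iff)

text \<open>The perpendicular gradients of \<open>chi * trig_stream\<close> and of \<open>trig_stream\<close> in the explicit form
  computed by \<open>perp_grad_cutoff_trig_stream\<close> and \<open>perp_grad_trig_stream\<close>; the index pairs the time
  with the translation, so that the families below are uniform in both.\<close>

definition cutoff_trig_field :: "(real^2 \<Rightarrow> real) \<Rightarrow> (real \<Rightarrow> real) \<Rightarrow> (real \<Rightarrow> real) \<Rightarrow>
    (real \<Rightarrow> real) \<Rightarrow> (real \<Rightarrow> real) \<Rightarrow> real \<times> (real^2) \<Rightarrow> real^2 \<Rightarrow> real^2" where
  "cutoff_trig_field chi a1 a2 a3 a4 i z = (\<chi> j.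
     if j = 1 then - (pd chi 2 z * trig_stream a1 a2 a3 a4 (fst i) (snd i) z
                      + chi z * trig_stream_d2 a1 a2 a3 a4 (fst i) (snd i) z)
     else pd chi 1 z * trig_stream a1 a2 a3 a4 (fst i) (snd i) z
          + chi z * trig_stream_d1 a1 a2 a3 a4 (fst i) (snd i) z)"

definition trig_field :: "(real \<Rightarrow> real) \<Rightarrow> (real \<Rightarrow> real) \<Rightarrow> (real \<Rightarrow> real) \<Rightarrow> (real \<Rightarrow> real) \<Rightarrow>
    real \<times> (real^2) \<Rightarrow> real^2 \<Rightarrow> real^2" where
  "trig_field a1 a2 a3 a4 i z = (\<chi> j.
     if j = 1 then - trig_stream_d2 a1 a2 a3 a4 (fst i) (snd i) z
     else trig_stream_d1 a1 a2 a3 a4 (fst i) (snd i) z)"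

definition unif_lipschitz :: "'i set \<Rightarrow> ('i \<Rightarrow> real^2 \<Rightarrow> real) \<Rightarrow> bool" where
  "unif_lipschitz I f \<longleftrightarrow> (\<exists>L. \<forall>i\<in>I. \<forall>p q. \<bar>f i p - f i q\<bar> \<le> L * norm (p - q))"

definition unif_bounded :: "'i set \<Rightarrow> ('i \<Rightarrow> real^2 \<Rightarrow> real) \<Rightarrow> bool" where
  "unif_bounded I f \<longleftrightarrow> (\<exists>B. \<forall>i\<in>I. \<forall>p. \<bar>f i p\<bar> \<le> B)"

lemma unif_lipschitz_add: "unif_lipschitz I f \<Longrightarrow> unif_lipschitz I g \<Longrightarrow> unif_lipschitz I (\<lambda>i p. f i p + g i p)"
proof -
  assume "unif_lipschitz I f" "unif_lipschitz I g"
  then obtain L1 L2 where L1: "\<forall>i\<in>I. \<forall>p q. \<bar>f i p - f i q\<bar> \<le> L1 * norm (p - q)"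
    and L2: "\<forall>i\<in>I. \<forall>p q. \<bar>g i p - g i q\<bar> \<le> L2 * norm (p - q)" unfolding unif_lipschitz_def by blast
  have "\<bar>(f i p + g i p) - (f i q + g i q)\<bar> \<le> (L1 + L2) * norm (p - q)" if "i \<in> I" for i p q
  proof -
    have "\<bar>(f i p + g i p) - (f i q + g i q)\<bar> \<le> \<bar>f i p - f i q\<bar> + \<bar>g i p - g i q\<bar>" by simp
    also have "\<dots> \<le> L1 * norm (p - q) + L2 * norm (p - q)"
    proof -
      have "\<bar>f i p - f i q\<bar> \<le> L1 * norm (p - q)" "\<bar>g i p - g i q\<bar> \<le> L2 * norm (p - q)" using L1 L2 that by auto
      then show ?thesis by linarith
    qed
    finally show ?thesis by (simp add: algebra_simps)
  qed
  then show ?thesis unfolding unif_lipschitz_def by blast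
qed

lemma unif_lipschitz_uminus: "unif_lipschitz I f \<Longrightarrow> unif_lipschitz I (\<lambda>i p. - f i p)"
proof -
  have e: "\<bar>- f i p - - f i q\<bar> = \<bar>f i p - f i q\<bar>" for i p q by linarith
  show "unif_lipschitz I f \<Longrightarrow> unif_lipschitz I (\<lambda>i p. - f i p)" unfolding unif_lipschitz_def e .
qed

lemma unif_lipschitz_diff: "unif_lipschitz I f \<Longrightarrow> unif_lipschitz I g \<Longrightarrow> unif_lipschitz I (\<lambda>i p. f i p - g i p)"
  using unif_lipschitz_add[of I f "\<lambda>i p. - g i p"] unif_lipschitz_uminus[of I g] by simp

lemma unif_bounded_add: "unif_bounded I f \<Longrightarrow> unif_bounded I g \<Longrightarrow> unif_bounded I (\<lambda>i p. f i p + g i p)"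
proof -
  assume "unif_bounded I f" "unif_bounded I g"
  then obtain B1 B2 where B1: "\<forall>i\<in>I. \<forall>p. \<bar>f i p\<bar> \<le> B1" and B2: "\<forall>i\<in>I. \<forall>p. \<bar>g i p\<bar> \<le> B2"
    unfolding unif_bounded_def by blast
  have "\<bar>f i p + g i p\<bar> \<le> B1 + B2" if "i \<in> I" for i p
  proof -
    have "\<bar>f i p\<bar> \<le> B1" "\<bar>g i p\<bar> \<le> B2" using B1 B2 that by auto
    then show ?thesis by linarith
  qed
  then show ?thesis unfolding unif_bounded_def by blast
qed

lemma unif_bounded_uminus: "unif_bounded I f \<Longrightarrow> unif_bounded I (\<lambda>i p. - f i p)"
  unfolding unif_bounded_def by simp

lemma unif_bounded_diff: "unif_bounded I f \<Longrightarrow> unif_bounded I g \<Longrightarrow> unif_bounded I (\<lambda>i p. f i p - g i p)"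
  using unif_bounded_add[of I f "\<lambda>i p. - g i p"] unif_bounded_uminus[of I g] by simp

lemma unif_lipschitz_mult:
  assumes "unif_lipschitz I f" "unif_lipschitz I g" "unif_bounded I f" "unif_bounded I g"
  shows "unif_lipschitz I (\<lambda>i p. f i p * g i p)"
proof -
  obtain L1 L2 where L1: "\<forall>i\<in>I. \<forall>p q. \<bar>f i p - f i q\<bar> \<le> L1 * norm (p - q)"
    and L2: "\<forall>i\<in>I. \<forall>p q. \<bar>g i p - g i q\<bar> \<le> L2 * norm (p - q)" using assms unfolding unif_lipschitz_def by blast
  obtain B1 B2 where B1: "\<forall>i\<in>I. \<forall>p. \<bar>f i p\<bar> \<le> B1" and B2: "\<forall>i\<in>I. \<forall>p. \<bar>g i p\<bar> \<le> B2"
    using assms unfolding unif_bounded_def by blast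
  have "\<bar>f i p * g i p - f i q * g i q\<bar> \<le> (B1 * L2 + B2 * L1) * norm (p - q)" if i: "i \<in> I" for i p q
  proof -
    have "f i p * g i p - f i q * g i q = f i p * (g i p - g i q) + g i q * (f i p - f i q)"
      by (simp add: algebra_simps)
    then have "\<bar>f i p * g i p - f i q * g i q\<bar> \<le> \<bar>f i p\<bar> * \<bar>g i p - g i q\<bar> + \<bar>g i q\<bar> * \<bar>f i p - f i q\<bar>"
      by (metis abs_mult abs_triangle_ineq)
    also have "\<dots> \<le> B1 * (L2 * norm (p - q)) + B2 * (L1 * norm (p - q))"
    proof -
      have a: "\<bar>f i p\<bar> \<le> B1" "\<bar>g i q\<bar> \<le> B2" using B1 B2 i by auto
      have b: "\<bar>g i p - g i q\<bar> \<le> L2 * norm (p - q)" "\<bar>f i p - f i q\<bar> \<le> L1 * norm (p - q)" using L1 L2 i by auto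
      have "\<bar>f i p\<bar> * \<bar>g i p - g i q\<bar> \<le> B1 * (L2 * norm (p - q))"
        by (rule mult_mono[OF a(1) b(1)]) (use a in auto)
      moreover have "\<bar>g i q\<bar> * \<bar>f i p - f i q\<bar> \<le> B2 * (L1 * norm (p - q))"
        by (rule mult_mono[OF a(2) b(2)]) (use a in auto)
      ultimately show ?thesis by linarith
    qed
    finally show ?thesis by (simp add: algebra_simps)
  qed
  then show ?thesis unfolding unif_lipschitz_def by blast
qed

lemma unif_bounded_mult: "unif_bounded I f \<Longrightarrow> unif_bounded I g \<Longrightarrow> unif_bounded I (\<lambda>i p. f i p * g i p)"
proof -
  assume "unif_bounded I f" "unif_bounded I g"
  then obtain B1 B2 where B1: "\<forall>i\<in>I. \<forall>p. \<bar>f i p\<bar> \<le> B1" and B2: "\<forall>i\<in>I. \<forall>p. \<bar>g i p\<bar> \<le> B2"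
    unfolding unif_bounded_def by blast
  have "\<bar>f i p * g i p\<bar> \<le> B1 * B2" if "i \<in> I" for i p
  proof -
    have a: "\<bar>f i p\<bar> \<le> B1" "\<bar>g i p\<bar> \<le> B2" using B1 B2 that by auto
    have "\<bar>f i p\<bar> * \<bar>g i p\<bar> \<le> B1 * B2" by (rule mult_mono[OF a]) (use a in auto)
    then show ?thesis by (simp add: abs_mult)
  qed
  then show ?thesis unfolding unif_bounded_def by blast
qed

lemma unif_lipschitz_const: "unif_lipschitz I (\<lambda>i p. c i)"
  unfolding unif_lipschitz_def by (rule exI[of _ 0]) simp

lemma unif_bounded_const: "\<forall>i\<in>I. \<bar>c i\<bar> \<le> B \<Longrightarrow> unif_bounded I (\<lambda>i p. c i)"
  unfolding unif_bounded_def by blast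

lemma unif_lipschitz_single: "(\<And>p q. \<bar>g p - g q\<bar> \<le> L * norm (p - q)) \<Longrightarrow> unif_lipschitz I (\<lambda>i p. g p)"
  unfolding unif_lipschitz_def by blast

lemma unif_bounded_single: "(\<And>p. \<bar>g p\<bar> \<le> B) \<Longrightarrow> unif_bounded I (\<lambda>i p. g p)"
  unfolding unif_bounded_def by blast

lemma unif_lipschitz_sin: "unif_lipschitz I (\<lambda>i p. sin (p$j - c i))"
proof -
  have "\<bar>sin (p$j - c i) - sin (q$j - c i)\<bar> \<le> 1 * norm (p - q)" for i p q
  proof -
    have "\<bar>sin (p$j - c i) - sin (q$j - c i)\<bar> = \<bar>2 * sin ((p$j - q$j) / 2) * cos ((p$j - c i + (q$j - c i)) / 2)\<bar>"
      by (simp add: sin_diff_sin)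
    also have "\<dots> \<le> 2 * \<bar>sin ((p$j - q$j) / 2)\<bar>"
      using mult_left_mono[OF abs_cos_le_one[of "(p$j - c i + (q$j - c i)) / 2"] abs_ge_zero[of "sin ((p$j - q$j) / 2)"]]
      by (simp add: abs_mult)
    also have "\<dots> \<le> 2 * \<bar>(p$j - q$j) / 2\<bar>" using abs_sin_x_le_abs_x[of "(p$j - q$j) / 2"] by linarith
    also have "\<dots> = \<bar>(p - q)$j\<bar>" by simp
    also have "\<dots> \<le> norm (p - q)" by (rule component_le_norm_cart)
    finally show ?thesis by simp
  qed
  then show ?thesis unfolding unif_lipschitz_def by blast
qed

lemma unif_lipschitz_cos: "unif_lipschitz I (\<lambda>i p. cos (p$j - c i))"
proof -
  have "\<bar>cos (p$j - c i) - cos (q$j - c i)\<bar> \<le> 1 * norm (p - q)" for i p q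
  proof -
    have "\<bar>cos (p$j - c i) - cos (q$j - c i)\<bar> = \<bar>2 * sin ((p$j - c i + (q$j - c i)) / 2) * sin ((q$j - p$j) / 2)\<bar>"
      by (simp add: cos_diff_cos)
    also have "\<dots> \<le> 2 * \<bar>sin ((q$j - p$j) / 2)\<bar>"
      using mult_right_mono[OF abs_sin_le_one[of "(p$j - c i + (q$j - c i)) / 2"] abs_ge_zero[of "sin ((q$j - p$j) / 2)"]]
      by (simp add: abs_mult)
    also have "\<dots> \<le> 2 * \<bar>(q$j - p$j) / 2\<bar>" using abs_sin_x_le_abs_x[of "(q$j - p$j) / 2"] by linarith
    also have "\<dots> = \<bar>(p - q)$j\<bar>" by simp
    also have "\<dots> \<le> norm (p - q)" by (rule component_le_norm_cart)
    finally show ?thesis by simp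
  qed
  then show ?thesis unfolding unif_lipschitz_def by blast
qed

lemma unif_bounded_sin: "unif_bounded I (\<lambda>i p. sin (p$j - c i))"
  unfolding unif_bounded_def by (rule exI[of _ 1]) simp

lemma unif_bounded_cos: "unif_bounded I (\<lambda>i p. cos (p$j - c i))"
  unfolding unif_bounded_def by (rule exI[of _ 1]) simp

lemma norm_vec2: "norm (x::real^2) \<le> \<bar>x$1\<bar> + \<bar>x$2\<bar>"
  using norm_le_l1_cart[of x] by (simp add: sum_2)

lemma unif_lipschitz_vec2:
  assumes "unif_lipschitz I f" "unif_lipschitz I g"
  shows "\<exists>L. \<forall>i\<in>I. \<forall>p q.
           norm ((\<chi> j. if j = 1 then f i p else g i p) - (\<chi> j. if j = 1 then f i q else g i q) :: real^2)
             \<le> L * norm (p - q)"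
proof -
  obtain L1 L2 where L1: "\<forall>i\<in>I. \<forall>p q. \<bar>f i p - f i q\<bar> \<le> L1 * norm (p - q)"
    and L2: "\<forall>i\<in>I. \<forall>p q. \<bar>g i p - g i q\<bar> \<le> L2 * norm (p - q)"
    using assms unfolding unif_lipschitz_def by blast
  have "norm ((\<chi> j. if j = 1 then f i p else g i p) - (\<chi> j. if j = 1 then f i q else g i q) :: real^2)
      \<le> (L1 + L2) * norm (p - q)" if i: "i \<in> I" for i p q
  proof -
    have "norm ((\<chi> j. if j = 1 then f i p else g i p) - (\<chi> j. if j = 1 then f i q else g i q) :: real^2)
       \<le> \<bar>f i p - f i q\<bar> + \<bar>g i p - g i q\<bar>"
      using norm_vec2[of "(\<chi> j. if j = 1 then f i p else g i p) - (\<chi> j. if j = 1 then f i q else g i q)"]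
      by simp
    also have "\<dots> \<le> L1 * norm (p - q) + L2 * norm (p - q)"
    proof -
      have "\<bar>f i p - f i q\<bar> \<le> L1 * norm (p - q)" "\<bar>g i p - g i q\<bar> \<le> L2 * norm (p - q)" using L1 L2 i by auto
      then show ?thesis by linarith
    qed
    finally show ?thesis by (simp add: algebra_simps)
  qed
  then show ?thesis by blast
qed

lemma unif_bounded_vec2:
  assumes "unif_bounded I f" "unif_bounded I g"
  shows "\<exists>B. \<forall>i\<in>I. \<forall>p. norm ((\<chi> j. if j = 1 then f i p else g i p) :: real^2) \<le> B"
proof -
  obtain B1 B2 where B1: "\<forall>i\<in>I. \<forall>p. \<bar>f i p\<bar> \<le> B1" and B2: "\<forall>i\<in>I. \<forall>p. \<bar>g i p\<bar> \<le> B2"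
    using assms unfolding unif_bounded_def by blast
  have "norm ((\<chi> j. if j = 1 then f i p else g i p) :: real^2) \<le> B1 + B2" if "i \<in> I" for i p
  proof -
    have "\<bar>f i p\<bar> \<le> B1" "\<bar>g i p\<bar> \<le> B2" using B1 B2 that by auto
    moreover have "norm ((\<chi> j. if j = 1 then f i p else g i p) :: real^2) \<le> \<bar>f i p\<bar> + \<bar>g i p\<bar>"
      using norm_vec2[of "(\<chi> j. if j = 1 then f i p else g i p)"] by simp
    ultimately show ?thesis by linarith
  qed
  then show ?thesis by blast
qed

lemma ex_lipschitz_const_pos:
  fixes f :: "'i \<Rightarrow> 'a::real_normed_vector \<Rightarrow> 'b::real_normed_vector"
  assumes "\<And>i p q. i \<in> I \<Longrightarrow> norm (f i p - f i q) \<le> K * norm (p - q)"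
  shows "\<exists>K'>0. \<forall>i\<in>I. \<forall>p q. norm (f i p - f i q) \<le> K' * norm (p - q)"
proof (intro exI[of _ "max K 1"] conjI ballI allI)
  fix i p q assume "i \<in> I"
  then show "norm (f i p - f i q) \<le> max K 1 * norm (p - q)"
    using assms[of i p q] by (meson max.cobounded1 mult_right_mono norm_ge_zero order_trans)
qed simp

section \<open>The controlled field\<close>

locale control_construction =
  fixes M :: nat and L :: real and c :: "nat \<Rightarrow> real^2" and c0 :: "real^2" and S :: "nat \<Rightarrow> real^2"
    and \<mu> :: "real^2 \<Rightarrow> real" and chi :: "real^2 \<Rightarrow> real"
    and Tstar tc0 :: real and ta tb tc :: "nat \<Rightarrow> real"
    and ybar :: "real^2 \<Rightarrow> real \<Rightarrow> real^2" and ya yb :: real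
    and phistar :: "real^2 \<Rightarrow> real \<Rightarrow> real" and a1 a2 a3 a4 :: "real \<Rightarrow> real"
    and ustar U :: "real^2 \<Rightarrow> real \<Rightarrow> real^2" and r :: real
  assumes shifts: "\<And>j. j \<in> {1..M} \<Longrightarrow> (\<lambda>y. y + S j) ` tsquare (c j) L = tsquare c0 L"
    and chi_smooth: "smooth_fun chi" and chi_per: "periodic_fun chi"
    and Tstar_pos: "0 < Tstar" and tc0_pos: "0 < tc0"
    and ta_def: "\<And>j. ta j = tc0 + (3 * real j - 2) * Tstar"
    and tb_def: "\<And>j. tb j = tc0 + (3 * real j - 1) * Tstar"
    and tc_def: "\<And>j. tc j = tc0 + 3 * real j * Tstar"
    and ybar_smooth: "smooth_fun (\<lambda>p::(real^2) \<times> real. ybar (fst p) (snd p))"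
    and ybar_support: "0 < ya" "\<And>y t. t \<notin> {ya..yb} \<Longrightarrow> ybar y t = 0"
    and ybar_per: "\<And>t. periodic_fun (\<lambda>y. ybar y t)"
    and ybar_vanish: "\<And>j y t. j \<in> {1..M} \<Longrightarrow> t \<in> {ta j..tb j} \<Longrightarrow> ybar y t = 0"
    and ybar_flow: "\<And>j y t. j \<in> {1..M} \<Longrightarrow> infdist y (tsquare (c j) L) < L \<Longrightarrow>
                      t \<in> {ta j..tb j} \<Longrightarrow> torus_eq (flow UNIV ybar y 0 t) (y + S j)"
    and ybar_odd: "\<And>j y \<tau>. j \<in> {1..M} \<Longrightarrow> \<bar>\<tau>\<bar> \<le> 3 * Tstar / 2 \<Longrightarrow>
                      ybar y ((tc (j - 1) + tc j) / 2 + \<tau>) = - ybar y ((tc (j - 1) + tc j) / 2 - \<tau>)"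
    and a_smooth: "smooth_fun a1" "smooth_fun a2" "smooth_fun a3" "smooth_fun a4"
    and span: "\<And>y t. t \<in> {0..Tstar} \<Longrightarrow>
                 phistar y t = a1 t * sin (y $ 1) + a2 t * sin (y $ 2) + a3 t * cos (y $ 1) + a4 t * cos (y $ 2)"
    and ustar_def: "\<And>y t. ustar y t = perp_grad (\<lambda>z. phistar z t) y"
    and ustar_rev: "\<And>y t. t \<in> {0..Tstar} \<Longrightarrow> ustar y (Tstar - t) = - ustar y t"
    and r_less_L: "r < L"
    and r_chi: "\<And>y. infdist y (tsquare c0 L) < r \<Longrightarrow> chi y = 1"
    and small: "\<And>S' y s t. y \<in> supp \<mu> \<Longrightarrow> s \<in> {0..Tstar} \<Longrightarrow> t \<in> {0..Tstar} \<Longrightarrow>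
                  infdist (flow {0..Tstar} (\<lambda>z \<tau>. perp_grad (\<lambda>w. chi w * phistar (w - S') \<tau>) z) y s t)
                    (tsquare c0 L) < r \<and>
                  infdist (flow {0..Tstar} (\<lambda>z \<tau>. ustar (z - S') \<tau>) y s t) (tsquare c0 L) < r"
    and U_def: "\<And>y t. U y t = ybar y t +
                  (\<Sum>j\<in>{1..M}. indicator {ta j..tb j} t *\<^sub>R perp_grad (\<lambda>z. chi z * phistar (z - S j) (t - ta j)) y)"
begin

abbreviation "G \<equiv> cutoff_trig_field chi a1 a2 a3 a4"
abbreviation "H \<equiv> trig_field a1 a2 a3 a4"
abbreviation "Is \<equiv> {0..Tstar}"

lemma tb_eq: "tb j = ta j + Tstar" unfolding ta_def tb_def by (simp add: algebra_simps)

lemma ta_pos: "j \<ge> 1 \<Longrightarrow> 0 < ta j"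
proof -
  assume "j \<ge> 1"
  then have "1 \<le> real j" by simp
  then have "0 \<le> (3 * real j - 2) * Tstar" using Tstar_pos by simp
  then show ?thesis unfolding ta_def using tc0_pos by linarith
qed

lemma phistar_eq_trig_stream: "t \<in> Is \<Longrightarrow> phistar y t = trig_stream a1 a2 a3 a4 t 0 y"
  unfolding span trig_stream_def by simp

lemma perp_grad_cutoff_phistar_eq: "t \<in> Is \<Longrightarrow> perp_grad (\<lambda>w. chi w * phistar (w - S') t) z = G (t, S') z"
proof -
  assume t: "t \<in> Is"
  have "(\<lambda>w. chi w * phistar (w - S') t) = (\<lambda>w. chi w * trig_stream a1 a2 a3 a4 t S' w)"
    using phistar_eq_trig_stream[OF t] by (simp add: trig_stream_def fun_eq_iff)
  then show ?thesis
    unfolding cutoff_trig_field_def fst_conv snd_conv using perp_grad_cutoff_trig_stream[OF chi_smooth] by simp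
qed

lemma ustar_translate_eq: "t \<in> Is \<Longrightarrow> ustar (z - S') t = H (t, S') z"
proof -
  assume t: "t \<in> Is"
  have "(\<lambda>w. phistar w t) = (\<lambda>w. trig_stream a1 a2 a3 a4 t 0 w)"
    using phistar_eq_trig_stream[OF t] by (simp add: fun_eq_iff)
  then have e: "ustar (z - S') t = (\<chi> j. if j = 1 then - trig_stream_d2 a1 a2 a3 a4 t 0 (z - S')
                                      else trig_stream_d1 a1 a2 a3 a4 t 0 (z - S'))"
    unfolding ustar_def using perp_grad_trig_stream by simp
  have e1: "trig_stream_d1 a1 a2 a3 a4 t 0 (z - S') = trig_stream_d1 a1 a2 a3 a4 t S' z"
    and e2: "trig_stream_d2 a1 a2 a3 a4 t 0 (z - S') = trig_stream_d2 a1 a2 a3 a4 t S' z"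
    unfolding trig_stream_d1_def trig_stream_d2_def by simp_all
  show ?thesis unfolding trig_field_def fst_conv snd_conv e e1 e2 by (rule refl)
qed

lemma coefficients_odd:
  assumes t: "t \<in> Is"
  shows "a1 (Tstar - t) = - a1 t" "a2 (Tstar - t) = - a2 t" "a3 (Tstar - t) = - a3 t" "a4 (Tstar - t) = - a4 t"
proof -
  \<comment> \<open>Evaluating the odd field at \<open>0\<close> and at \<open>(pi/2, pi/2)\<close> isolates the four coefficients.\<close>
  have t': "Tstar - t \<in> Is" using t by simp
  have e: "H (Tstar - t, 0) y = - H (t, 0) y" for y
    using ustar_rev[OF t, of y] ustar_translate_eq[OF t, of y 0] ustar_translate_eq[OF t', of y 0] by simp
  have e0: "H (Tstar - t, 0) 0 = - H (t, 0) 0" by (rule e)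
  have e1: "H (Tstar - t, 0) (\<chi> j. pi/2) = - H (t, 0) (\<chi> j. pi/2)" by (rule e)
  from e0 have "(H (Tstar - t, 0) 0)$1 = (- H (t, 0) 0)$1" "(H (Tstar - t, 0) 0)$2 = (- H (t, 0) 0)$2" by simp_all
  then show "a1 (Tstar - t) = - a1 t" "a2 (Tstar - t) = - a2 t"
    unfolding trig_field_def trig_stream_d1_def trig_stream_d2_def by simp_all
  from e1 have "(H (Tstar - t, 0) (\<chi> j. pi/2))$1 = (- H (t, 0) (\<chi> j. pi/2))$1"
    "(H (Tstar - t, 0) (\<chi> j. pi/2))$2 = (- H (t, 0) (\<chi> j. pi/2))$2" by simp_all
  then show "a3 (Tstar - t) = - a3 t" "a4 (Tstar - t) = - a4 t"
    unfolding trig_field_def trig_stream_d1_def trig_stream_d2_def by simp_all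
qed

lemma cutoff_trig_field_odd: "t \<in> Is \<Longrightarrow> G (Tstar - t, S') z = - G (t, S') z"
  using coefficients_odd[of t]
  unfolding cutoff_trig_field_def trig_stream_def trig_stream_d1_def trig_stream_d2_def
  by (simp add: vec_eq_iff algebra_simps)

lemma unif_bounded_coefficient:
  fixes a :: "real \<Rightarrow> real"
  assumes "smooth_fun a"
  shows "unif_bounded (Is \<times> UNIV) (\<lambda>i z. a (fst i))"
proof -
  obtain A where "\<forall>t\<in>Is. norm (a t) \<le> A"
    using compact_imp_bounded[OF compact_continuous_image[OF smooth_fun_continuous_on[OF assms] compact_Icc]]
    unfolding bounded_iff by blast
  then show ?thesis by (intro unif_bounded_const[of _ _ A]) auto
qed

lemma unif_lipschitz_trig_stream: "unif_lipschitz (Is \<times> UNIV) (\<lambda>i z. trig_stream a1 a2 a3 a4 (fst i) (snd i) z)"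
  and unif_bounded_trig_stream: "unif_bounded (Is \<times> UNIV) (\<lambda>i z. trig_stream a1 a2 a3 a4 (fst i) (snd i) z)"
  and unif_lipschitz_trig_stream_d1: "unif_lipschitz (Is \<times> UNIV) (\<lambda>i z. trig_stream_d1 a1 a2 a3 a4 (fst i) (snd i) z)"
  and unif_bounded_trig_stream_d1: "unif_bounded (Is \<times> UNIV) (\<lambda>i z. trig_stream_d1 a1 a2 a3 a4 (fst i) (snd i) z)"
  and unif_lipschitz_trig_stream_d2: "unif_lipschitz (Is \<times> UNIV) (\<lambda>i z. trig_stream_d2 a1 a2 a3 a4 (fst i) (snd i) z)"
  and unif_bounded_trig_stream_d2: "unif_bounded (Is \<times> UNIV) (\<lambda>i z. trig_stream_d2 a1 a2 a3 a4 (fst i) (snd i) z)"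
proof -
  note B = unif_bounded_coefficient[OF a_smooth(1)] unif_bounded_coefficient[OF a_smooth(2)]
    unif_bounded_coefficient[OF a_smooth(3)] unif_bounded_coefficient[OF a_smooth(4)]
  note trig = unif_lipschitz_sin unif_lipschitz_cos unif_bounded_sin unif_bounded_cos
  show "unif_lipschitz (Is \<times> UNIV) (\<lambda>i z. trig_stream a1 a2 a3 a4 (fst i) (snd i) z)" unfolding trig_stream_def
    by (intro unif_lipschitz_add unif_lipschitz_mult unif_lipschitz_const trig B)
  show "unif_bounded (Is \<times> UNIV) (\<lambda>i z. trig_stream a1 a2 a3 a4 (fst i) (snd i) z)" unfolding trig_stream_def
    by (intro unif_bounded_add unif_bounded_mult trig B)
  show "unif_lipschitz (Is \<times> UNIV) (\<lambda>i z. trig_stream_d1 a1 a2 a3 a4 (fst i) (snd i) z)" unfolding trig_stream_d1_def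
    by (intro unif_lipschitz_diff unif_lipschitz_mult unif_lipschitz_const trig B)
  show "unif_bounded (Is \<times> UNIV) (\<lambda>i z. trig_stream_d1 a1 a2 a3 a4 (fst i) (snd i) z)" unfolding trig_stream_d1_def
    by (intro unif_bounded_diff unif_bounded_mult trig B)
  show "unif_lipschitz (Is \<times> UNIV) (\<lambda>i z. trig_stream_d2 a1 a2 a3 a4 (fst i) (snd i) z)" unfolding trig_stream_d2_def
    by (intro unif_lipschitz_diff unif_lipschitz_mult unif_lipschitz_const trig B)
  show "unif_bounded (Is \<times> UNIV) (\<lambda>i z. trig_stream_d2 a1 a2 a3 a4 (fst i) (snd i) z)" unfolding trig_stream_d2_def
    by (intro unif_bounded_diff unif_bounded_mult trig B)
qed

lemma pd_eq_frechet_derivative: "pd f k = (\<lambda>x. frechet_derivative f (at x) (axis k 1))"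
  by (simp add: pd_def fun_eq_iff)

lemma chi_unif: "unif_lipschitz I (\<lambda>i z. chi z)" "unif_bounded I (\<lambda>i z. chi z)"
  "unif_lipschitz I (\<lambda>i z. pd chi k z)" "unif_bounded I (\<lambda>i z. pd chi k z)"
proof -
  have sm: "smooth_fun (pd chi k)"
    unfolding pd_eq_frechet_derivative by (rule smooth_fun_directional_derivative[OF chi_smooth])
  have pe: "periodic_fun (pd chi k)"
    unfolding pd_eq_frechet_derivative by (rule periodic_fun_directional_derivative[OF chi_smooth chi_per])
  obtain L1 L2 where "\<forall>p q. \<bar>chi p - chi q\<bar> \<le> L1 * norm (p - q)"
    and "\<forall>p q. \<bar>pd chi k p - pd chi k q\<bar> \<le> L2 * norm (p - q)"
    using smooth_periodic_lipschitz[OF chi_smooth chi_per] smooth_periodic_lipschitz[OF sm pe] by blast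
  then show "unif_lipschitz I (\<lambda>i z. chi z)" "unif_lipschitz I (\<lambda>i z. pd chi k z)"
    by (intro unif_lipschitz_single, blast)+
  obtain B1 B2 where "\<forall>p. \<bar>chi p\<bar> \<le> B1" and "\<forall>p. \<bar>pd chi k p\<bar> \<le> B2"
    using smooth_periodic_bounded[OF chi_smooth chi_per] smooth_periodic_bounded[OF sm pe] by blast
  then show "unif_bounded I (\<lambda>i z. chi z)" "unif_bounded I (\<lambda>i z. pd chi k z)"
    by (intro unif_bounded_single, blast)+
qed

lemmas trig_stream_unif =
  unif_lipschitz_trig_stream unif_bounded_trig_stream unif_lipschitz_trig_stream_d1
  unif_bounded_trig_stream_d1 unif_lipschitz_trig_stream_d2 unif_bounded_trig_stream_d2

lemma cutoff_trig_field_lipschitz: "\<exists>K. \<forall>i\<in>Is \<times> UNIV. \<forall>p q. norm (G i p - G i q) \<le> K * norm (p - q)"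
  unfolding cutoff_trig_field_def
  by (rule unif_lipschitz_vec2)
    (intro unif_lipschitz_add unif_lipschitz_uminus unif_lipschitz_mult unif_bounded_add unif_bounded_uminus
      unif_bounded_mult trig_stream_unif chi_unif)+

lemma cutoff_trig_field_bounded: "\<exists>B. \<forall>i\<in>Is \<times> UNIV. \<forall>p. norm (G i p) \<le> B"
  unfolding cutoff_trig_field_def
  by (rule unif_bounded_vec2) (intro unif_bounded_add unif_bounded_uminus unif_bounded_mult trig_stream_unif chi_unif)+

lemma trig_field_lipschitz: "\<exists>K. \<forall>i\<in>Is \<times> UNIV. \<forall>p q. norm (H i p - H i q) \<le> K * norm (p - q)"
  unfolding trig_field_def by (rule unif_lipschitz_vec2) (intro unif_lipschitz_uminus trig_stream_unif)+

lemma trig_field_bounded: "\<exists>B. \<forall>i\<in>Is \<times> UNIV. \<forall>p. norm (H i p) \<le> B"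
  unfolding trig_field_def by (rule unif_bounded_vec2) (intro unif_bounded_uminus trig_stream_unif)+

abbreviation "ybar_pair \<equiv> (\<lambda>p::(real^2) \<times> real. ybar (fst p) (snd p))"

lemma continuous_on_ybar_pair: "continuous_on UNIV ybar_pair" by (rule smooth_fun_continuous_on[OF ybar_smooth])

lemma ybar_nonpos_time: "t \<le> 0 \<Longrightarrow> ybar p t = 0"
  using ybar_support by simp

lemma ybar_bounded: "\<exists>B. \<forall>p t. norm (ybar p t) \<le> B"
proof -
  obtain B where B: "\<forall>y. \<forall>t\<in>{ya..yb}. norm (ybar_pair (y, t)) \<le> B"
    using bounded_periodic_in_space[OF continuous_on_ybar_pair _ compact_Icc] ybar_per unfolding periodic_fun_def by force
  have "norm (ybar p t) \<le> max B 0" for p t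
  proof (cases "t \<in> {ya..yb}")
    case True
    then have "norm (ybar_pair (p, t)) \<le> B" using B by blast
    then show ?thesis by simp
  next
    case False then show ?thesis using ybar_support(2) by simp
  qed
  then show ?thesis by blast
qed

lemma ybar_partial_derivative_bounded:
  "\<exists>B. \<forall>y. \<forall>t\<in>{ya..yb}. norm (frechet_derivative ybar_pair (at (y, t)) (axis j 1, 0)) \<le> B"
proof (rule bounded_periodic_in_space[OF _ _ compact_Icc, of "\<lambda>p. frechet_derivative ybar_pair (at p) (axis j 1, 0)"])
  show "continuous_on UNIV (\<lambda>p. frechet_derivative ybar_pair (at p) (axis j 1, 0))"
    by (rule smooth_fun_continuous_on[OF smooth_fun_directional_derivative[OF ybar_smooth]])
  fix y t v assume v: "v \<in> lat2"
  have "frechet_derivative ybar_pair (at ((y, t) + (v, 0))) = frechet_derivative ybar_pair (at (y, t))"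
  proof (rule frechet_derivative_translation_invariant)
    show "ybar_pair (p + (v, 0)) = ybar_pair p" for p using ybar_per v unfolding periodic_fun_def by simp
    show "ybar_pair differentiable at ((y, t) + (v, 0))" by (rule smooth_fun_differentiable[OF ybar_smooth])
  qed
  then show "frechet_derivative ybar_pair (at (y + v, t)) (axis j 1, 0)
      = frechet_derivative ybar_pair (at (y, t)) (axis j 1, 0)" by simp
qed

lemma ybar_lipschitz: "\<exists>K>0. \<forall>t p q. norm (ybar p t - ybar q t) \<le> K * norm (p - q)"
proof -
  obtain B1 where B1: "\<forall>y. \<forall>t\<in>{ya..yb}. norm (frechet_derivative ybar_pair (at (y, t)) (axis 1 1, 0)) \<le> B1"
    using ybar_partial_derivative_bounded by blast
  obtain B2 where B2: "\<forall>y. \<forall>t\<in>{ya..yb}. norm (frechet_derivative ybar_pair (at (y, t)) (axis 2 1, 0)) \<le> B2"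
    using ybar_partial_derivative_bounded by blast
  define B where "B = max (max B1 B2) 0"
  have "norm (ybar p t - ybar q t) \<le> (2 * B) * norm (p - q)" for t p q
  proof (cases "t \<in> {ya..yb}")
    case True
    show ?thesis
    proof (rule lipschitz_of_partial_derivative_bound)
      fix y :: "real^2"
      have "((\<lambda>y. (y, t)) has_derivative (\<lambda>h. (h, 0))) (at y)" by (auto intro!: derivative_eq_intros)
      from has_derivative_compose[OF this smooth_fun_has_derivative[OF ybar_smooth]]
      show "((\<lambda>y. ybar y t) has_derivative (\<lambda>h. frechet_derivative ybar_pair (at (y, t)) (h, 0))) (at y)"
        by simp
      fix j :: 2
      show "norm (frechet_derivative ybar_pair (at (y, t)) (axis j 1, 0)) \<le> B"
        using B1 B2 True exhaust_2[of j] unfolding B_def by (auto simp: le_max_iff_disj)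
    qed
  next
    case False
    then show ?thesis using ybar_support(2) by (simp add: B_def)
  qed
  then have "\<exists>K>0. \<forall>t\<in>UNIV. \<forall>p q. norm (ybar p t - ybar q t) \<le> K * norm (p - q)"
    by (intro ex_lipschitz_const_pos)
  then show ?thesis by simp
qed

lemma continuous_on_ybar_along: "continuous_on A \<phi> \<Longrightarrow> continuous_on A (\<lambda>r. ybar (\<phi> r) r)"
proof -
  assume c: "continuous_on A \<phi>"
  have "continuous_on A (\<lambda>r. ybar_pair (\<phi> r, r))"
    by (rule continuous_on_compose2[OF continuous_on_ybar_pair]) (auto intro: continuous_on_Pair c continuous_on_id)
  then show ?thesis by simp
qed

lemma ybar_flow_exists: "\<exists>\<phi>. is_sol UNIV ybar p 0 \<phi>"
proof -
  obtain K where K: "K > 0" "\<And>t p q. norm (ybar p t - ybar q t) \<le> K * norm (p - q)" using ybar_lipschitz by blast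
  obtain B where B: "\<forall>p t. norm (ybar p t) \<le> B" using ybar_bounded by blast
  show ?thesis
  proof (rule is_sol_UNIV_exists[OF K])
    show "norm (ybar p t) \<le> B" for t using B by blast
    show "(\<lambda>r. ybar (\<phi> r) r) integrable_on {0..T}" if "continuous_on {0..T} \<phi>" for \<phi> and T :: real
      by (intro integrable_continuous_real continuous_on_ybar_along that)
  qed (rule ybar_nonpos_time)
qed

lemma U_eq: "U p t = ybar p t + (\<Sum>j\<in>{1..M}. if t \<in> {ta j..tb j} then G (t - ta j, S j) p else 0)"
proof -
  have "indicator {ta j..tb j} t *\<^sub>R perp_grad (\<lambda>z. chi z * phistar (z - S j) (t - ta j)) p
        = (if t \<in> {ta j..tb j} then G (t - ta j, S j) p else 0)" for j
  proof (cases "t \<in> {ta j..tb j}")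
    case True
    then have "t - ta j \<in> Is" using tb_eq[of j] by simp
    then show ?thesis using True perp_grad_cutoff_phistar_eq by simp
  qed (auto simp: indicator_def)
  then show ?thesis unfolding U_def by simp
qed

lemma control_interval_subset_step: "j \<ge> 1 \<Longrightarrow> {ta j..tb j} \<subseteq> {tc (j - 1)..tc j}"
proof -
  assume j: "j \<ge> 1"
  have "real (j - 1) = real j - 1" using j by simp
  then show ?thesis unfolding ta_def tb_def tc_def using Tstar_pos by (auto simp: algebra_simps)
qed

lemma notin_other_control_interval:
  assumes "j \<ge> 1" "k \<ge> 1" "j \<noteq> k" "t \<in> {tc (j - 1)..tc j}"
  shows "t \<notin> {ta k..tb k}"
proof -
  have rj: "real (j - 1) = real j - 1" using assms by simp
  consider "k \<ge> j + 1" | "k + 1 \<le> j" using assms(3) by linarith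
  then show ?thesis
  proof cases
    case 1
    then have "real k \<ge> real j + 1" by simp
    then have "3 * real j < 3 * real k - 2" by (simp add: algebra_simps)
    then have "(3 * real j) * Tstar < (3 * real k - 2) * Tstar" using Tstar_pos by (rule mult_strict_right_mono)
    then have "ta k > tc j" unfolding ta_def tc_def by simp
    then show ?thesis using assms(4) by simp
  next
    case 2
    then have "real k + 1 \<le> real j" by simp
    then have "3 * real k - 1 < 3 * (real j - 1)" by (simp add: algebra_simps)
    then have "(3 * real k - 1) * Tstar < 3 * (real j - 1) * Tstar" using Tstar_pos by (rule mult_strict_right_mono)
    then have "tb k < tc (j - 1)" unfolding tb_def tc_def rj by simp
    then show ?thesis using assms(4) by simp
  qed
qed

lemma U_on_control_interval: "i \<in> {1..M} \<Longrightarrow> \<tau> \<in> Is \<Longrightarrow> U p (ta i + \<tau>) = G (\<tau>, S i) p"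
proof -
  assume i: "i \<in> {1..M}" and tau: "\<tau> \<in> Is"
  have ti: "ta i + \<tau> \<in> {ta i..tb i}" using tau tb_eq[of i] by simp
  have z: "ybar p (ta i + \<tau>) = 0" by (rule ybar_vanish[OF i ti])
  have o: "(if ta i + \<tau> \<in> {ta j..tb j} then G (ta i + \<tau> - ta j, S j) p else 0) = 0" if j: "j \<in> {1..M} - {i}" for j
  proof -
    have "ta i + \<tau> \<in> {tc (i - 1)..tc i}" using control_interval_subset_step[of i] i ti by auto
    then have "ta i + \<tau> \<notin> {ta j..tb j}" using notin_other_control_interval[of i j] i j by auto
    then show ?thesis by auto
  qed
  have s0: "(\<Sum>j\<in>{1..M} - {i}. if ta i + \<tau> \<in> {ta j..tb j} then G (ta i + \<tau> - ta j, S j) p else 0) = 0"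
    by (rule sum.neutral) (use o in blast)
  have "(\<Sum>j\<in>{1..M}. if ta i + \<tau> \<in> {ta j..tb j} then G (ta i + \<tau> - ta j, S j) p else 0)
      = (if ta i + \<tau> \<in> {ta i..tb i} then G (ta i + \<tau> - ta i, S i) p else 0)
       + (\<Sum>j\<in>{1..M} - {i}. if ta i + \<tau> \<in> {ta j..tb j} then G (ta i + \<tau> - ta j, S j) p else 0)"
    by (rule sum.remove[OF finite_atLeastAtMost i])
  then have "(\<Sum>j\<in>{1..M}. if ta i + \<tau> \<in> {ta j..tb j} then G (ta i + \<tau> - ta j, S j) p else 0)
      = (if ta i + \<tau> \<in> {ta i..tb i} then G (ta i + \<tau> - ta i, S i) p else 0)"
    unfolding s0 by simp
  then show ?thesis unfolding U_eq z using ti by simp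
qed

lemma U_nonpos_time: "t \<le> 0 \<Longrightarrow> U p t = 0"
proof -
  assume t: "t \<le> 0"
  have "t \<notin> {ta j..tb j}" if "j \<in> {1..M}" for j using ta_pos[of j] that t by simp
  then show ?thesis unfolding U_eq ybar_nonpos_time[OF t] by (auto intro!: sum.neutral)
qed

lemma U_eq_ybar_in_step: "t \<in> {tc (j - 1)..tc j} \<Longrightarrow> j \<ge> 1 \<Longrightarrow> t \<notin> {ta j..tb j} \<Longrightarrow> U p t = ybar p t"
proof -
  assume t: "t \<in> {tc (j - 1)..tc j}" and j: "j \<ge> 1" and nt: "t \<notin> {ta j..tb j}"
  have "t \<notin> {ta k..tb k}" if "k \<in> {1..M}" for k
    using notin_other_control_interval[OF j _ _ t, of k] that nt by (cases "k = j") auto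
  then show ?thesis unfolding U_eq by (auto intro!: sum.neutral)
qed

lemma U_eq_ybar_before_tc0: "t \<le> tc0 \<Longrightarrow> U p t = ybar p t"
proof -
  assume t: "t \<le> tc0"
  have "t \<notin> {ta k..tb k}" if "k \<in> {1..M}" for k
  proof -
    have "1 \<le> real k" using that by simp
    then have "0 < (3 * real k - 2) * Tstar" using Tstar_pos by simp
    then show ?thesis unfolding ta_def using t by simp
  qed
  then show ?thesis unfolding U_eq by (auto intro!: sum.neutral)
qed

lemma U_lipschitz: "\<exists>K>0. \<forall>t p q. norm (U p t - U q t) \<le> K * norm (p - q)"
proof -
  obtain Ky where Ky: "\<forall>t p q. norm (ybar p t - ybar q t) \<le> Ky * norm (p - q)" using ybar_lipschitz by blast
  obtain KG where KG: "\<forall>i\<in>Is \<times> UNIV. \<forall>p q. norm (G i p - G i q) \<le> KG * norm (p - q)" using cutoff_trig_field_lipschitz by blast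
  define K where "K = max Ky 0 + real M * max KG 0 + 1"
  have "0 \<le> max Ky 0" "0 \<le> real M * max KG 0" by simp_all
  then have K0: "K > 0" unfolding K_def by linarith
  have "norm (U p t - U q t) \<le> K * norm (p - q)" for t p q
  proof -
    define g where "g p j = (if t \<in> {ta j..tb j} then G (t - ta j, S j) p else 0)" for p j
    have gj: "norm (g p j - g q j) \<le> max KG 0 * norm (p - q)" for j
    proof (cases "t \<in> {ta j..tb j}")
      case True
      then have "(t - ta j, S j) \<in> Is \<times> UNIV" using tb_eq[of j] by simp
      then have "norm (G (t - ta j, S j) p - G (t - ta j, S j) q) \<le> KG * norm (p - q)" using KG by blast
      also have "\<dots> \<le> max KG 0 * norm (p - q)" by (simp add: mult_right_mono)
      finally show ?thesis unfolding g_def using True by simp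
    qed (auto simp: g_def)
    have "U p t - U q t = (ybar p t - ybar q t) + (\<Sum>j\<in>{1..M}. g p j - g q j)"
      unfolding U_eq g_def[symmetric] by (simp add: sum_subtractf)
    then have "norm (U p t - U q t) \<le> norm (ybar p t - ybar q t) + norm (\<Sum>j\<in>{1..M}. g p j - g q j)"
      by (simp add: norm_triangle_ineq)
    also have "\<dots> \<le> max Ky 0 * norm (p - q) + (\<Sum>j\<in>{1..M}. max KG 0 * norm (p - q))"
    proof (rule add_mono)
      show "norm (ybar p t - ybar q t) \<le> max Ky 0 * norm (p - q)"
        using Ky[rule_format, of p t q] by (smt (verit) mult_right_mono norm_ge_zero)
      show "norm (\<Sum>j\<in>{1..M}. g p j - g q j) \<le> (\<Sum>j\<in>{1..M}. max KG 0 * norm (p - q))"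
        by (rule sum_norm_le) (rule gj)
    qed
    also have "\<dots> = (max Ky 0 + real M * max KG 0) * norm (p - q)" by (simp add: algebra_simps)
    also have "\<dots> \<le> K * norm (p - q)" unfolding K_def by (simp add: mult_right_mono)
    finally show ?thesis .
  qed
  then show ?thesis using K0 by blast
qed

lemma U_bounded: "\<exists>B. \<forall>t. norm (U p t) \<le> B"
proof -
  obtain By where By: "\<forall>p t. norm (ybar p t) \<le> By" using ybar_bounded by blast
  obtain BG where BG: "\<forall>i\<in>Is \<times> UNIV. \<forall>p. norm (G i p) \<le> BG" using cutoff_trig_field_bounded by blast
  have "norm (U p t) \<le> By + real M * max BG 0" for t
  proof -
    have gj: "norm (if t \<in> {ta j..tb j} then G (t - ta j, S j) p else 0) \<le> max BG 0" for j
    proof (cases "t \<in> {ta j..tb j}")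
      case True
      then have "(t - ta j, S j) \<in> Is \<times> UNIV" using tb_eq[of j] by simp
      then have "norm (G (t - ta j, S j) p) \<le> BG" using BG by blast
      then show ?thesis using True by simp
    qed auto
    have "norm (U p t) \<le> norm (ybar p t) + norm (\<Sum>j\<in>{1..M}. if t \<in> {ta j..tb j} then G (t - ta j, S j) p else 0)"
      unfolding U_eq by (rule norm_triangle_ineq)
    also have "\<dots> \<le> By + (\<Sum>j\<in>{1..M}. max BG 0)"
      by (rule add_mono) (use By in blast, rule sum_norm_le, rule gj)
    finally show ?thesis by simp
  qed
  then show ?thesis by blast
qed

lemma continuous_on_cutoff_trig_field_along: "continuous_on A \<phi> \<Longrightarrow> continuous_on A (\<lambda>r. G (r - c', S') (\<phi> r))"
proof -
  assume c: "continuous_on A \<phi>"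
  have cchi: "continuous_on A (\<lambda>r. chi (\<phi> r))"
    by (rule continuous_on_compose2[OF smooth_fun_continuous_on[OF chi_smooth, of UNIV] c]) simp
  have cpd: "continuous_on A (\<lambda>r. pd chi k (\<phi> r))" for k
  proof -
    have "smooth_fun (pd chi k)" unfolding pd_eq_frechet_derivative by (rule smooth_fun_directional_derivative[OF chi_smooth])
    then show ?thesis by (rule continuous_on_compose2[OF smooth_fun_continuous_on[where S=UNIV] c]) simp
  qed
  have ca: "continuous_on A (\<lambda>r. a (r - c'))" if sa: "smooth_fun a" for a :: "real \<Rightarrow> real"
    by (rule continuous_on_compose2[OF smooth_fun_continuous_on[OF sa, of UNIV]]) (auto intro!: continuous_intros)
  note cs = cchi cpd ca[OF a_smooth(1)] ca[OF a_smooth(2)] ca[OF a_smooth(3)] ca[OF a_smooth(4)] c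
  show ?thesis
    unfolding cutoff_trig_field_def trig_stream_def trig_stream_d1_def trig_stream_d2_def fst_conv snd_conv
    by (intro continuous_on_vec_lambda continuous_on_if_const continuous_intros cs)
qed

lemma continuous_on_trig_field_along: "continuous_on A \<phi> \<Longrightarrow> continuous_on A (\<lambda>r. H (r, S') (\<phi> r))"
proof -
  assume c: "continuous_on A \<phi>"
  have ca: "continuous_on A (\<lambda>r. a r)" if sa: "smooth_fun a" for a :: "real \<Rightarrow> real"
    by (rule smooth_fun_continuous_on[OF sa])
  note cs = ca[OF a_smooth(1)] ca[OF a_smooth(2)] ca[OF a_smooth(3)] ca[OF a_smooth(4)] c
  show ?thesis unfolding trig_field_def trig_stream_d1_def trig_stream_d2_def fst_conv snd_conv
    by (intro continuous_on_vec_lambda continuous_on_if_const continuous_intros cs)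
qed

lemma integrable_U_along: "continuous_on {0..T} \<phi> \<Longrightarrow> (\<lambda>r. U (\<phi> r) r) integrable_on {0..T}"
proof -
  assume c: "continuous_on {0..T} \<phi>"
  have iy: "(\<lambda>r. ybar (\<phi> r) r) integrable_on {0..T}"
    by (intro integrable_continuous_real continuous_on_ybar_along c)
  have ij: "(\<lambda>r. if r \<in> {ta j..tb j} then G (r - ta j, S j) (\<phi> r) else 0) integrable_on {0..T}" for j
  proof -
    have cc: "continuous_on ({ta j..tb j} \<inter> {0..T}) (\<lambda>r. G (r - ta j, S j) (\<phi> r))"
      by (rule continuous_on_cutoff_trig_field_along[OF continuous_on_subset[OF c]]) auto
    have e: "{ta j..tb j} \<inter> {0..T} = {max (ta j) 0..min (tb j) T}" by auto
    have "(\<lambda>r. G (r - ta j, S j) (\<phi> r)) integrable_on ({ta j..tb j} \<inter> {0..T})"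
      unfolding e by (rule integrable_continuous_real) (use cc e in simp)
    then show ?thesis by (rule integrable_restrict_Int[THEN iffD2])
  qed
  have "(\<lambda>r. ybar (\<phi> r) r + (\<Sum>j\<in>{1..M}. if r \<in> {ta j..tb j} then G (r - ta j, S j) (\<phi> r) else 0)) integrable_on {0..T}"
    by (intro integrable_add iy integrable_sum ij) simp
  then show ?thesis unfolding U_eq .
qed

lemma U_flow_exists: "\<exists>\<phi>. is_sol UNIV U p 0 \<phi>"
proof -
  obtain K where K: "K > 0" "\<forall>t p q. norm (U p t - U q t) \<le> K * norm (p - q)" using U_lipschitz by blast
  obtain B where B: "\<forall>t. norm (U p t) \<le> B" using U_bounded by blast
  show ?thesis
  proof (rule is_sol_UNIV_exists[OF K(1)])
    fix t and p' q' :: "real^2" show "norm (U p' t - U q' t) \<le> K * norm (p' - q')" using K(2) by blast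
  next
    fix t show "norm (U p t) \<le> B" using B by blast
  next
    fix \<phi> :: "real \<Rightarrow> real^2" and T :: real assume "0 \<le> T" "continuous_on {0..T} \<phi>"
    then show "(\<lambda>r. U (\<phi> r) r) integrable_on {0..T}" by (intro integrable_U_along)
  next
    fix p' :: "real^2" and t :: real assume "t \<le> 0" then show "U p' t = 0" by (rule U_nonpos_time)
  qed
qed

lemma tc_sum: "j \<ge> 1 \<Longrightarrow> tc (j - 1) + tc j = ta j + tb j"
proof -
  assume "j \<ge> 1"
  then have "real (j - 1) = real j - 1" by simp
  then show ?thesis unfolding tc_def ta_def tb_def by (simp add: algebra_simps)
qed

lemma tc_len: "j \<ge> 1 \<Longrightarrow> tc j - tc (j - 1) = 3 * Tstar"
proof -
  assume "j \<ge> 1"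
  then have "real (j - 1) = real j - 1" by simp
  then show ?thesis unfolding tc_def by (simp add: algebra_simps)
qed

lemma ybar_odd_in_step: 
  assumes j: "j \<in> {1..M}" and t: "t \<in> {tc (j - 1)..tc j}"
  shows "ybar p (tc (j - 1) + tc j - t) = - ybar p t"
proof -
  define m where "m = (tc (j - 1) + tc j) / 2"
  have l: "tc j - tc (j - 1) = 3 * Tstar" using tc_len j by simp
  have rj: "real (j - 1) = real j - 1" using j by simp
  have md: "m = tc (j - 1) + 3 * Tstar / 2" unfolding m_def tc_def rj by (simp add: field_simps)
  have "m - t \<le> 3 * Tstar / 2" "-(3 * Tstar / 2) \<le> m - t" using t l md by auto
  then have "\<bar>m - t\<bar> \<le> 3 * Tstar / 2" by linarith
  from ybar_odd[OF j this, of p] have "ybar p (m + (m - t)) = - ybar p (m - (m - t))" unfolding m_def by simp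
  then show ?thesis unfolding m_def by (simp add: algebra_simps)
qed

lemma U_odd_in_step:
  assumes j: "j \<in> {1..M}" and t: "t \<in> {tc (j - 1)..tc j}"
  shows "U p (tc (j - 1) + tc j - t) = - U p t"
proof -
  define t' where "t' = tc (j - 1) + tc j - t"
  have j1: "j \<ge> 1" using j by simp
  have t': "t' \<in> {tc (j - 1)..tc j}" using t unfolding t'_def by simp
  have sum: "tc (j - 1) + tc j = ta j + tb j" by (rule tc_sum[OF j1])
  have g: "(if t' \<in> {ta k..tb k} then G (t' - ta k, S k) p else 0) = - (if t \<in> {ta k..tb k} then G (t - ta k, S k) p else 0)"
    if k: "k \<in> {1..M}" for k
  proof (cases "k = j")
    case False
    have "t \<notin> {ta k..tb k}" using notin_other_control_interval[OF j1 _ _ t, of k] k False by auto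
    moreover have "t' \<notin> {ta k..tb k}" using notin_other_control_interval[OF j1 _ _ t', of k] k False by auto
    ultimately show ?thesis by auto
  next
    case True
    show ?thesis
    proof (cases "t \<in> {ta j..tb j}")
      case tin: True
      then have t'in: "t' \<in> {ta j..tb j}" unfolding t'_def sum by auto
      have tau: "t - ta j \<in> Is" using tin tb_eq[of j] by simp
      have e: "t' - ta j = Tstar - (t - ta j)" unfolding t'_def sum tb_eq by simp
      have "G (t' - ta j, S j) p = - G (t - ta j, S j) p" unfolding e by (rule cutoff_trig_field_odd[OF tau])
      then show ?thesis using True tin t'in by simp
    next
      case tout: False
      then have "t' \<notin> {ta j..tb j}" unfolding t'_def sum by auto
      then show ?thesis using True tout by auto
    qed
  qed
  have sc: "(\<Sum>k\<in>{1..M}. if t' \<in> {ta k..tb k} then G (t' - ta k, S k) p else 0)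
     = (\<Sum>k\<in>{1..M}. - (if t \<in> {ta k..tb k} then G (t - ta k, S k) p else 0))"
    by (rule sum.cong[OF refl g])
  have "U p t' = ybar p t' + (\<Sum>k\<in>{1..M}. - (if t \<in> {ta k..tb k} then G (t - ta k, S k) p else 0))"
    unfolding U_eq sc ..
  also have "\<dots> = - U p t" unfolding U_eq t'_def ybar_odd_in_step[OF j t] by (simp add: sum_negf)
  finally show ?thesis unfolding t'_def .
qed

abbreviation "uloc S' \<equiv> (\<lambda>z \<tau>. perp_grad (\<lambda>w. chi w * phistar (w - S') \<tau>) z)"
abbreviation "ushift S' \<equiv> (\<lambda>z \<tau>. ustar (z - S') \<tau>)"
abbreviation "near_O \<equiv> {y. infdist y (tsquare c0 L) < r}"

lemma uloc_lipschitz: "\<exists>K>0. \<forall>t\<in>Is. \<forall>p q. norm (uloc S' p t - uloc S' q t) \<le> K * norm (p - q)"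
proof -
  obtain K where "\<forall>i\<in>Is \<times> UNIV. \<forall>p q. norm (G i p - G i q) \<le> K * norm (p - q)"
    using cutoff_trig_field_lipschitz by blast
  then have "norm (uloc S' p t - uloc S' q t) \<le> K * norm (p - q)" if "t \<in> Is" for t p q
    using that by (simp add: perp_grad_cutoff_phistar_eq)
  then show ?thesis using ex_lipschitz_const_pos[of Is "\<lambda>t p. uloc S' p t"] by blast
qed

lemma ushift_lipschitz: "\<exists>K>0. \<forall>t\<in>Is. \<forall>p q. norm (ushift S' p t - ushift S' q t) \<le> K * norm (p - q)"
proof -
  obtain K where "\<forall>i\<in>Is \<times> UNIV. \<forall>p q. norm (H i p - H i q) \<le> K * norm (p - q)"
    using trig_field_lipschitz by blast
  then have "norm (ushift S' p t - ushift S' q t) \<le> K * norm (p - q)" if "t \<in> Is" for t p q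
    using that by (simp add: ustar_translate_eq)
  then show ?thesis using ex_lipschitz_const_pos[of Is "\<lambda>t p. ushift S' p t"] by blast
qed

lemma ushift_flow_exists: "\<exists>\<phi>. is_sol Is (ushift S') p 0 \<phi>"
proof -
  obtain K where K: "K > 0" "\<forall>t\<in>Is. \<forall>p q. norm (ushift S' p t - ushift S' q t) \<le> K * norm (p - q)" using ushift_lipschitz by blast
  obtain B where B: "\<forall>i\<in>Is \<times> UNIV. \<forall>p. norm (H i p) \<le> B" using trig_field_bounded by blast
  show ?thesis
  proof (rule is_sol_Icc_exists[of 0 Tstar K])
    show "0 \<le> Tstar" using Tstar_pos by simp
    show "0 < K" by (rule K(1))
    show "norm (ushift S' p' t - ushift S' q' t) \<le> K * norm (p' - q')" if "t \<in> {0..Tstar}" for t p' q' using K(2) that by blast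
    show "norm (ushift S' p t) \<le> B" if t: "t \<in> {0..Tstar}" for t
    proof -
      have "(t, S') \<in> Is \<times> UNIV" using t by simp
      then have "norm (H (t, S') p) \<le> B" using B by blast
      then show ?thesis using ustar_translate_eq[OF t, of p S'] by simp
    qed
    fix \<phi> :: "real \<Rightarrow> real^2" and T :: real assume T: "0 \<le> T" "T \<le> Tstar" and c: "continuous_on {0..T} \<phi>"
    have "(\<lambda>r. H (r, S') (\<phi> r)) integrable_on {0..T}"
      by (rule integrable_continuous_real[OF continuous_on_trig_field_along[OF c]])
    then show "(\<lambda>r. ushift S' (\<phi> r) r) integrable_on {0..T}"
    proof (rule integrable_eq)
      fix r assume "r \<in> {0..T}"
      then have "r \<in> Is" using T by simp
      then show "H (r, S') (\<phi> r) = ushift S' (\<phi> r) r" using ustar_translate_eq by simp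
    qed
  qed
qed

lemma uloc_eq_ushift_near_O: "y \<in> near_O \<Longrightarrow> \<tau> \<in> Is \<Longrightarrow> uloc S' y \<tau> = ushift S' y \<tau>"
proof -
  assume y: "y \<in> near_O" and t: "\<tau> \<in> Is"
  have o: "open near_O" by (intro open_Collect_less continuous_intros)
  have c1: "\<And>z. z \<in> near_O \<Longrightarrow> chi z = 1" using r_chi by simp
  have p1: "pd chi 1 y = 0" by (rule pd_locally_constant[OF o y c1])
  have p2: "pd chi 2 y = 0" by (rule pd_locally_constant[OF o y c1])
  have cy: "chi y = 1" using c1 y .
  have "G (\<tau>, S') y = H (\<tau>, S') y" unfolding cutoff_trig_field_def trig_field_def fst_conv snd_conv p1 p2 cy mult_zero_left mult_1 add_0
    by (rule refl)
  then show ?thesis using perp_grad_cutoff_phistar_eq[OF t] ustar_translate_eq[OF t] by simp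
qed

lemma ushift_lat2_periodic: "v \<in> lat2 \<Longrightarrow> \<tau> \<in> Is \<Longrightarrow> ushift S' (p + v) \<tau> = ushift S' p \<tau>"
proof -
  assume v: "v \<in> lat2" and t: "\<tau> \<in> Is"
  have e: "(p + v)$k - S'$k = (p$k - S'$k) + v$k" for k by simp
  have "H (\<tau>, S') (p + v) = H (\<tau>, S') p"
    unfolding trig_field_def trig_stream_d1_def trig_stream_d2_def fst_conv snd_conv e sin_add_lat2[OF v] cos_add_lat2[OF v] ..
  then show ?thesis using ustar_translate_eq[OF t] by simp
qed

lemma near_O_lat2_periodic: "v \<in> lat2 \<Longrightarrow> y + v \<in> near_O \<longleftrightarrow> y \<in> near_O"
  using infdist_tsquare_translate_lat2 by simp

lemma U_ybar_solutions_agree_forward: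
  assumes sU: "integral_solution UNIV U \<phi>U" and sY: "integral_solution UNIV ybar \<phi>Y"
    and ab: "a \<le> b" and init: "\<phi>U a = \<phi>Y a"
    and eq: "\<And>p t. t \<in> {a..b} \<Longrightarrow> t \<noteq> b \<Longrightarrow> U p t = ybar p t"
  shows "\<phi>U b = \<phi>Y b"
proof -
  obtain K where K: "K > 0" "\<And>t p q. norm (ybar p t - ybar q t) \<le> K * norm (p - q)"
    using ybar_lipschitz by blast
  have U_ybar: "integral_solution {a..b} ybar \<phi>U"
    by (rule integral_solution_cong_finite[OF integral_solution_subset[OF sU], of _ "{b}"]) (use eq in auto)
  have Y_ybar: "integral_solution {a..b} ybar \<phi>Y" by (rule integral_solution_subset[OF sY]) simp
  show ?thesis
    by (rule integral_solution_unique_forward[OF ab K(1) _ U_ybar Y_ybar init]) (use K(2) ab in auto)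
qed

lemma U_solution_returns_on_step:
  assumes sol: "integral_solution UNIV U \<phi>" and j: "j \<in> {1..M}"
  shows "\<phi> (tc j) = \<phi> (tc (j - 1))"
proof -
  obtain K where "K > 0" "\<And>t p q. norm (U p t - U q t) \<le> K * norm (p - q)" using U_lipschitz by blast
  then show ?thesis
    using U_odd_in_step[OF j] tc_len[of j] j Tstar_pos
    by (intro integral_solution_odd_field_returns[OF _ _ _ _ integral_solution_subset[OF sol]]) auto
qed

lemma ybar_solution_returns_on_step:
  assumes sol: "integral_solution UNIV ybar \<phi>" and j: "j \<in> {1..M}"
  shows "\<phi> (tc j) = \<phi> (tc (j - 1))"
proof -
  obtain K where "K > 0" "\<And>t p q. norm (ybar p t - ybar q t) \<le> K * norm (p - q)" using ybar_lipschitz by blast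
  then show ?thesis
    using ybar_odd_in_step[OF j] tc_len[of j] j Tstar_pos
    by (intro integral_solution_odd_field_returns[OF _ _ _ _ integral_solution_subset[OF sol]]) auto
qed

lemma U_ybar_solutions_agree_at_ta:
  assumes sU: "integral_solution UNIV U \<phi>U" and sY: "integral_solution UNIV ybar \<phi>Y"
    and init: "\<phi>U 0 = \<phi>Y 0" and i: "i \<in> {1..M}"
  shows "\<phi>U (ta i) = \<phi>Y (ta i)"
proof -
  have "\<phi>U (tc 0) = \<phi>Y (tc 0)"
    using U_ybar_solutions_agree_forward[OF sU sY _ init] tc0_pos U_eq_ybar_before_tc0
    by (simp add: tc_def)
  then have at_tc: "\<phi>U (tc j) = \<phi>Y (tc j)" if "j \<le> M" for j
    using that
  proof (induction j)
    case (Suc j)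
    then show ?case
      using U_solution_returns_on_step[OF sU, of "Suc j"] ybar_solution_returns_on_step[OF sY, of "Suc j"]
      by simp
  qed
  have i1: "1 \<le> i" and "real (i - 1) = real i - 1" using i by auto
  then have "tc (i - 1) \<le> ta i" unfolding tc_def ta_def using Tstar_pos by (simp add: algebra_simps)
  moreover have "ta i \<le> tc i" using control_interval_subset_step[OF i1] tb_eq[of i] Tstar_pos by auto
  then have "U p t = ybar p t" if "t \<in> {tc (i - 1)..ta i}" "t \<noteq> ta i" for p t
    using that by (intro U_eq_ybar_in_step[OF _ i1]) auto
  ultimately show ?thesis
    using U_ybar_solutions_agree_forward[OF sU sY] at_tc[of "i - 1"] i by auto
qed

lemma U_solution_on_control_interval:
  assumes sol: "integral_solution UNIV U \<phi>" and i: "i \<in> {1..M}"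
  shows "integral_solution Is (uloc (S i)) (\<lambda>\<tau>. \<phi> (ta i + \<tau>))"
proof -
  have "integral_solution Is (\<lambda>p \<tau>. U p (ta i + \<tau>)) (\<lambda>\<tau>. \<phi> (ta i + \<tau>))"
    by (rule integral_solution_shift_time[OF integral_solution_subset[OF sol]]) simp
  then show ?thesis
    by (rule integral_solution_cong_finite[OF _ is_interval_cc finite.emptyI])
      (simp add: U_on_control_interval[OF i] perp_grad_cutoff_phistar_eq)
qed

lemma solution_stays_near_O:
  assumes v: "v = uloc S' \<or> v = ushift S'" and sol: "integral_solution Is v \<phi>"
    and s: "s \<in> Is" "\<mu> (\<phi> s) \<noteq> 0" and t: "t \<in> Is"
  shows "\<phi> t \<in> near_O"
proof -
  have "\<exists>K>0. \<forall>t\<in>Is. \<forall>p q. norm (v p t - v q t) \<le> K * norm (p - q)"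
    using v uloc_lipschitz[of S'] ushift_lipschitz[of S'] by (elim disjE) simp_all
  then obtain K where K: "K > 0" "\<And>t p q. t \<in> Is \<Longrightarrow> norm (v p t - v q t) \<le> K * norm (p - q)"
    by blast
  have supp: "\<phi> s \<in> supp \<mu>" unfolding supp_def by (rule closure_subset[THEN subsetD]) (simp add: s(2))
  have "flow Is v (\<phi> s) s t = \<phi> t"
    by (rule flow_eqI[OF is_interval_cc K integral_solution_imp_is_sol[OF sol s(1)] t])
  moreover have "infdist (flow Is v (\<phi> s) s t) (tsquare c0 L) < r"
    using v small[OF supp s(1) t, of S'] by (elim disjE) simp_all
  ultimately show ?thesis by simp
qed

lemma infdist_square_shift: "i \<in> {1..M} \<Longrightarrow> infdist (y - S i) (tsquare (c i) L) = infdist y (tsquare c0 L)"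
  using infdist_translation[of y "S i" "tsquare (c i) L"] shifts by simp

lemma ybar_solution_from_near:
  assumes sol: "integral_solution UNIV ybar \<phi>" and i: "i \<in> {1..M}" and near: "\<phi> 0 + S i \<in> near_O"
  shows "torus_eq (\<phi> (ta i)) (\<phi> 0 + S i)"
proof -
  obtain K where K: "K > 0" "\<And>t p q. norm (ybar p t - ybar q t) \<le> K * norm (p - q)" using ybar_lipschitz by blast
  have "flow UNIV ybar (\<phi> 0) 0 (ta i) = \<phi> (ta i)"
    by (rule flow_eqI[OF _ K integral_solution_imp_is_sol[OF sol]]) auto
  moreover have "infdist (\<phi> 0) (tsquare (c i) L) < L"
    using infdist_square_shift[OF i, of "\<phi> 0 + S i"] near r_less_L by simp
  ultimately show ?thesis using ybar_flow[OF i, of "\<phi> 0" "ta i"] tb_eq[of i] Tstar_pos by simp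
qed

lemma ybar_solution_to_near:
  assumes sol: "integral_solution UNIV ybar \<phi>" and i: "i \<in> {1..M}" and near: "\<phi> (ta i) \<in> near_O"
  shows "torus_eq (\<phi> (ta i)) (\<phi> 0 + S i)"
proof -
  obtain K where K: "K > 0" "\<And>t p q. norm (ybar p t - ybar q t) \<le> K * norm (p - q)" using ybar_lipschitz by blast
  \<comment> \<open>The \<open>ybar\<close>-flow from \<open>\<phi> (ta i) - S i\<close> ends at a lattice translate of \<open>\<phi> (ta i)\<close>;
    translated back it passes through \<open>\<phi> (ta i)\<close>, so by uniqueness it starts at \<open>\<phi> 0\<close>.\<close>
  define p where "p = \<phi> (ta i) - S i"
  obtain \<psi> where \<psi>: "is_sol UNIV ybar p 0 \<psi>" using ybar_flow_exists by blast
  have sol\<psi>: "integral_solution UNIV ybar \<psi>" by (rule is_sol_imp_integral_solution[OF \<psi>]) simp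
  have "infdist p (tsquare (c i) L) < L"
    unfolding p_def infdist_square_shift[OF i] using near r_less_L by simp
  then have "torus_eq (flow UNIV ybar p 0 (ta i)) (p + S i)"
    using ybar_flow[OF i] tb_eq[of i] Tstar_pos by simp
  moreover have "flow UNIV ybar p 0 (ta i) = \<psi> (ta i)" by (rule flow_eqI[OF _ K \<psi>]) auto
  ultimately have u: "\<phi> (ta i) - \<psi> (ta i) \<in> lat2"
    unfolding torus_eq_def p_def using lat2_uminus by fastforce
  have translated: "integral_solution UNIV ybar (\<lambda>t. \<psi> t + (\<phi> (ta i) - \<psi> (ta i)))"
    by (rule integral_solution_translate[OF sol\<psi>]) (use ybar_per u in \<open>auto simp: periodic_fun_def\<close>)
  have "\<psi> 0 + (\<phi> (ta i) - \<psi> (ta i)) = \<phi> 0"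
    by (rule integral_solution_unique[where v = ybar, OF _ K(1) _ translated sol, of "ta i"]) (use K(2) in auto)
  then have "\<phi> (ta i) - (\<phi> 0 + S i) = - (\<phi> (ta i) - \<psi> (ta i))"
    using is_sol_initial[OF \<psi>] by (simp add: p_def algebra_simps)
  then show ?thesis unfolding torus_eq_def using lat2_uminus[OF u] by metis
qed

lemma uloc_ushift_solutions_agree:
  assumes solG: "integral_solution Is (uloc S') \<phi>" and solH: "integral_solution Is (ushift S') \<psi>"
    and init: "\<phi> 0 = \<psi> 0" and stays: "(\<forall>t\<in>Is. \<phi> t \<in> near_O) \<or> (\<forall>t\<in>Is. \<psi> t \<in> near_O)"
    and t: "t \<in> Is"
  shows "\<phi> t = \<psi> t"
proof -
  obtain KG where KG: "KG > 0" "\<And>t p q. t \<in> Is \<Longrightarrow> norm (uloc S' p t - uloc S' q t) \<le> KG * norm (p - q)"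
    using uloc_lipschitz by blast
  obtain KH where KH: "KH > 0" "\<And>t p q. t \<in> Is \<Longrightarrow> norm (ushift S' p t - ushift S' q t) \<le> KH * norm (p - q)"
    using ushift_lipschitz by blast
  from stays show ?thesis
  proof
    assume "\<forall>t\<in>Is. \<phi> t \<in> near_O"
    then show ?thesis
      by (intro integral_solution_unique_along[OF is_interval_cc KH solG solH _ _ init t])
        (use uloc_eq_ushift_near_O Tstar_pos in auto)
  next
    assume "\<forall>t\<in>Is. \<psi> t \<in> near_O"
    then show ?thesis
      by (intro integral_solution_unique_along[OF is_interval_cc KG solH solG _ _ init[symmetric] t, symmetric])
        (use uloc_eq_ushift_near_O Tstar_pos in auto)
  qed
qed

lemma control_interval_start_offset:
  assumes solU: "integral_solution UNIV U \<phi>" "\<phi> 0 = x"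
    and solH: "integral_solution Is (ushift (S i)) \<psi>" "\<psi> 0 = x + S i" and i: "i \<in> {1..M}"
    and stays: "(\<forall>t\<in>Is. \<phi> (ta i + t) \<in> near_O) \<or> (\<forall>t\<in>Is. \<psi> t \<in> near_O)"
  shows "torus_eq (\<phi> (ta i)) (x + S i)"
proof -
  obtain \<phi>Y where Y: "is_sol UNIV ybar x 0 \<phi>Y" using ybar_flow_exists by blast
  have solY: "integral_solution UNIV ybar \<phi>Y" by (rule is_sol_imp_integral_solution[OF Y]) simp
  have eq: "\<phi> (ta i) = \<phi>Y (ta i)"
    using U_ybar_solutions_agree_at_ta[OF solU(1) solY _ i] solU(2) is_sol_initial[OF Y] by simp
  have "0 \<in> Is" using Tstar_pos by simp
  from stays show ?thesis
  proof
    assume "\<forall>t\<in>Is. \<phi> (ta i + t) \<in> near_O"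
    then have "\<phi>Y (ta i) \<in> near_O" using eq \<open>0 \<in> Is\<close> by force
    then show ?thesis using ybar_solution_to_near[OF solY i] is_sol_initial[OF Y] eq by simp
  next
    assume "\<forall>t\<in>Is. \<psi> t \<in> near_O"
    then have "\<phi>Y 0 + S i \<in> near_O" using solH(2) is_sol_initial[OF Y] \<open>0 \<in> Is\<close> by force
    then show ?thesis using ybar_solution_from_near[OF solY i] is_sol_initial[OF Y] eq by simp
  qed
qed

lemma U_flow_eq_ushift_flow_mod_lat2:
  assumes i: "i \<in> {1..M}"
    and hyp: "\<exists>s\<in>Is. \<mu> (flow UNIV U x 0 (ta i + s)) \<noteq> 0 \<or> \<mu> (flow Is (ushift (S i)) (x + S i) 0 s) \<noteq> 0"
  shows "\<forall>t\<in>Is. torus_eq (flow UNIV U x 0 (ta i + t)) (flow Is (ushift (S i)) (x + S i) 0 t)"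
proof -
  obtain KU where KU: "KU > 0" "\<And>t p q. norm (U p t - U q t) \<le> KU * norm (p - q)" using U_lipschitz by blast
  obtain KH where KH: "KH > 0" "\<And>t p q. t \<in> Is \<Longrightarrow> norm (ushift (S i) p t - ushift (S i) q t) \<le> KH * norm (p - q)"
    using ushift_lipschitz by blast
  obtain \<phi>U where U: "is_sol UNIV U x 0 \<phi>U" using U_flow_exists by blast
  obtain \<phi>H where H: "is_sol Is (ushift (S i)) (x + S i) 0 \<phi>H" using ushift_flow_exists by blast
  have flowU: "flow UNIV U x 0 t = \<phi>U t" for t by (rule flow_eqI[OF _ KU U]) auto
  have flowH: "flow Is (ushift (S i)) (x + S i) 0 t = \<phi>H t" if "t \<in> Is" for t
    by (rule flow_eqI[OF is_interval_cc KH H that])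
  have solU: "integral_solution UNIV U \<phi>U" by (rule is_sol_imp_integral_solution[OF U]) simp
  have solH: "integral_solution Is (ushift (S i)) \<phi>H" by (rule is_sol_imp_integral_solution[OF H is_interval_cc])
  define \<phi>G where "\<phi>G \<tau> = \<phi>U (ta i + \<tau>)" for \<tau>
  have solG: "integral_solution Is (uloc (S i)) \<phi>G"
    unfolding \<phi>G_def by (rule U_solution_on_control_interval[OF solU i])
  obtain s where s: "s \<in> Is" "\<mu> (\<phi>G s) \<noteq> 0 \<or> \<mu> (\<phi>H s) \<noteq> 0"
    using hyp flowH unfolding flowU \<phi>G_def by auto
  have stays: "(\<forall>t\<in>Is. \<phi>G t \<in> near_O) \<or> (\<forall>t\<in>Is. \<phi>H t \<in> near_O)"
    using s(2) solution_stays_near_O[OF disjI1[OF refl] solG s(1)] solution_stays_near_O[OF disjI2[OF refl] solH s(1)]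
    by blast
  define v0 where "v0 = \<phi>G 0 - (x + S i)"
  have offset: "v0 \<in> lat2"
    using control_interval_start_offset[OF solU is_sol_initial[OF U] solH is_sol_initial[OF H] i] stays
    unfolding v0_def \<phi>G_def torus_eq_def by simp
  define \<psi> where "\<psi> t = \<phi>H t + v0" for t
  have sol\<psi>: "integral_solution Is (ushift (S i)) \<psi>"
    unfolding \<psi>_def by (rule integral_solution_translate[OF solH is_interval_cc]) (rule ushift_lat2_periodic[OF offset])
  have "(\<forall>t\<in>Is. \<phi>G t \<in> near_O) \<or> (\<forall>t\<in>Is. \<psi> t \<in> near_O)"
    using stays near_O_lat2_periodic[OF offset] unfolding \<psi>_def by blast
  then have "\<phi>G t = \<psi> t" if "t \<in> Is" for t
    using uloc_ushift_solutions_agree[OF solG sol\<psi> _ _ that] is_sol_initial[OF H] unfolding \<psi>_def v0_def by simp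
  then show ?thesis
    using offset flowH unfolding torus_eq_def flowU \<psi>_def \<phi>G_def by simp
qed

end

theorem lemma3p11:
  fixes \<omega> :: "(real^2) set" and M :: nat and L :: real
    and c :: "nat \<Rightarrow> real^2" and c0 :: "real^2" and S :: "nat \<Rightarrow> real^2"
    and \<mu> :: "real^2 \<Rightarrow> real" and chi :: "real^2 \<Rightarrow> real"
    and Tstar tc0 :: real and ta tb tc :: "nat \<Rightarrow> real"
    and ybar :: "real^2 \<Rightarrow> real \<Rightarrow> real^2"
    and phistar :: "real^2 \<Rightarrow> real \<Rightarrow> real"
    and ustar U :: "real^2 \<Rightarrow> real \<Rightarrow> real^2"
    and x :: "real^2" and i :: nat
  assumes omega: "open \<omega>" "\<omega> \<noteq> {}" "periodic_set \<omega>"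
    and M_pos: "M \<ge> 1"
    and L_pos: "L > 0"
    and cover: "(\<Union>j\<in>{1..M}. tsquare (c j) L) = UNIV"
    and O_in_omega: "closure (tsquare c0 L) \<subseteq> \<omega>"
    and shifts: "\<And>j. j \<in> {1..M} \<Longrightarrow> (\<lambda>y. y + S j) ` tsquare (c j) L = tsquare c0 L"
    and mu_smooth: "smooth_fun \<mu>" and mu_per: "periodic_fun \<mu>"
    and mu_range: "\<And>y. 0 \<le> \<mu> y \<and> \<mu> y \<le> 1"
    and mu_supp: "supp \<mu> \<subseteq> tsquare c0 L"
    and mu_partition: "\<And>y. (\<Sum>j\<in>{1..M}. \<mu> (y + S j)) = 1"
    and chi_smooth: "smooth_fun chi" and chi_per: "periodic_fun chi"
    and chi_supp: "supp chi \<subseteq> \<omega>"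
    and chi_one: "\<exists>V. open V \<and> closure (tsquare c0 L) \<subseteq> V \<and> (\<forall>y\<in>V. chi y = 1)"
    and Tstar_def: "Tstar = 1 / (3 * real M + 2)"
    and tc0: "0 < tc0" "tc0 + 3 * real M * Tstar < 1"
    and ta_def: "\<And>j. ta j = tc0 + (3 * real j - 2) * Tstar"
    and tb_def: "\<And>j. tb j = tc0 + (3 * real j - 1) * Tstar"
    and tc_def: "\<And>j. tc j = tc0 + 3 * real j * Tstar"
    and ybar_smooth: "smooth_fun (\<lambda>p::(real^2) \<times> real. ybar (fst p) (snd p))"
    and ybar_compact: "\<exists>a b. 0 < a \<and> a \<le> b \<and> b < 1 \<and> (\<forall>y t. t \<notin> {a..b} \<longrightarrow> ybar y t = 0)"
    and ybar_per: "\<And>t. periodic_fun (\<lambda>y. ybar y t)"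
    and ybar_div: "\<And>y t. divergence (\<lambda>z. ybar z t) y = 0"
    and ybar_vanish: "\<And>j y t. j \<in> {1..M} \<Longrightarrow> t \<in> {ta j..tb j} \<Longrightarrow> ybar y t = 0"
    and ybar_flow: "\<And>j y t. j \<in> {1..M} \<Longrightarrow> infdist y (tsquare (c j) L) < L \<Longrightarrow>
                      t \<in> {ta j..tb j} \<Longrightarrow> torus_eq (flow UNIV ybar y 0 t) (y + S j)"
    and ybar_odd: "\<And>j y \<tau>. j \<in> {1..M} \<Longrightarrow> \<bar>\<tau>\<bar> \<le> 3 * Tstar / 2 \<Longrightarrow>
                      ybar y ((tc (j - 1) + tc j) / 2 + \<tau>) = - ybar y ((tc (j - 1) + tc j) / 2 - \<tau>)"
    and phistar_span: "\<exists>a1 a2 a3 a4 :: real \<Rightarrow> real.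
                          smooth_fun a1 \<and> smooth_fun a2 \<and> smooth_fun a3 \<and> smooth_fun a4 \<and>
                          (\<forall>y. \<forall>t\<in>{0..Tstar}. phistar y t =
                             a1 t * sin (y $ 1) + a2 t * sin (y $ 2) + a3 t * cos (y $ 1) + a4 t * cos (y $ 2))"
    and ustar_def: "\<And>y t. ustar y t = perp_grad (\<lambda>z. phistar z t) y"
    and ustar_rev: "\<And>y t. t \<in> {0..Tstar} \<Longrightarrow> ustar y (Tstar - t) = - ustar y t"
    and small: "\<exists>r. 0 < r \<and> r < L \<and>
                  (\<forall>y. infdist y (tsquare c0 L) < r \<longrightarrow> chi y = 1) \<and>
                  (\<forall>S' y s t. y \<in> supp \<mu> \<longrightarrow> s \<in> {0..Tstar} \<longrightarrow> t \<in> {0..Tstar} \<longrightarrow>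
                     infdist (flow {0..Tstar} (\<lambda>z \<tau>. perp_grad (\<lambda>w. chi w * phistar (w - S') \<tau>) z) y s t)
                        (tsquare c0 L) < r \<and>
                     infdist (flow {0..Tstar} (\<lambda>z \<tau>. ustar (z - S') \<tau>) y s t) (tsquare c0 L) < r)"
    and U_def: "\<And>y t. U y t = ybar y t +
                  (\<Sum>j\<in>{1..M}. indicator {ta j..tb j} t *\<^sub>R
                      perp_grad (\<lambda>z. chi z * phistar (z - S j) (t - ta j)) y)"
    and i_range: "i \<in> {1..M}"
    and hyp: "\<exists>s\<in>{0..Tstar}. \<mu> (flow UNIV U x 0 (ta i + s)) \<noteq> 0 \<or>
                              \<mu> (flow {0..Tstar} (\<lambda>z \<tau>. ustar (z - S i) \<tau>) (x + S i) 0 s) \<noteq> 0"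
  shows "\<forall>t\<in>{0..Tstar}. torus_eq (flow UNIV U x 0 (ta i + t))
                                  (flow {0..Tstar} (\<lambda>z \<tau>. ustar (z - S i) \<tau>) (x + S i) 0 t)"
proof -
  \<comment> \<open>Not needed: the hypotheses on \<open>\<omega>\<close>, the covering, \<open>\<mu>\<close>, \<open>supp chi\<close>, \<open>chi_one\<close>,
    \<open>ybar_div\<close>, the bound \<open>tc0 + 3 * M * Tstar < 1\<close> and the bounds \<open>a \<le> b < 1\<close> on the support of
    \<open>ybar\<close>.\<close>
  obtain a1 a2 a3 a4 :: "real \<Rightarrow> real" where
    a: "smooth_fun a1" "smooth_fun a2" "smooth_fun a3" "smooth_fun a4"
    and span: "\<And>y t. t \<in> {0..Tstar} \<Longrightarrow>
      phistar y t = a1 t * sin (y $ 1) + a2 t * sin (y $ 2) + a3 t * cos (y $ 1) + a4 t * cos (y $ 2)"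
    using phistar_span by blast
  obtain ya yb where ya: "0 < ya" and ybar_support: "\<And>y t. t \<notin> {ya..yb} \<Longrightarrow> ybar y t = 0"
    using ybar_compact by blast
  obtain r where r: "r < L" "\<And>y. infdist y (tsquare c0 L) < r \<Longrightarrow> chi y = 1"
    "\<And>S' y s t. y \<in> supp \<mu> \<Longrightarrow> s \<in> {0..Tstar} \<Longrightarrow> t \<in> {0..Tstar} \<Longrightarrow>
      infdist (flow {0..Tstar} (\<lambda>z \<tau>. perp_grad (\<lambda>w. chi w * phistar (w - S') \<tau>) z) y s t) (tsquare c0 L) < r \<and>
      infdist (flow {0..Tstar} (\<lambda>z \<tau>. ustar (z - S') \<tau>) y s t) (tsquare c0 L) < r"
    using small by blast
  have Tstar_pos: "0 < Tstar" using Tstar_def by simp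
  interpret control_construction M L c c0 S \<mu> chi Tstar tc0 ta tb tc ybar ya yb phistar a1 a2 a3 a4 ustar U r
    by unfold_locales (fact assms a span ya ybar_support r Tstar_pos)+
  show ?thesis using U_flow_eq_ushift_flow_mod_lat2[OF i_range hyp] .
qed

end
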